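(* In the spatiotemporal E-GARCH model, assume $\mathbf{I}-\lambda_0\mathbf{W}_2$ is invertible, $\varrho(\lambda_1\mathbf{S})<1$ and $\varrho(\lambda_0\mathbf{W}_2)<1$, and let $\{\boldsymbol{\varepsilon}_t\}$ be i.i.d. $N(\mathbf{0},\mathbf{I}_n)$. Then the strictly stationary solution $\boldsymbol{Y}_t=\boldsymbol{\varepsilon}_t\odot\exp\big(\tfrac12\sum_{v\ge0}\lambda_1^v\mathbf{S}^v\boldsymbol{\Delta}_{t-v}\big)$ has finite moments of all orders and is weakly stationary. Writing $\mathbf{M}=\rho_0\lambda_1\mathbf{S}\mathbf{W}_1+\rho_1\mathbf{I}$ and $\mathbf{A}=((1-\lambda_1)\mathbf{I}-\lambda_0\mathbf{W}_2)^{-1}$, for all $t$ and $i,j\in\{1,\dots,n\}$ (all infinite products converging): $$E(Y_t(\boldsymbol{s}_i))=\exp\big(\tfrac12\boldsymbol{e}_i'\mathbf{A}\boldsymbol{\alpha}_1\big)\,E\Big(\varepsilon_1(\boldsymbol{s}_i)\exp\big(\tfrac12\rho_0\boldsymbol{e}_i'\mathbf{S}\mathbf{W}_1g(\boldsymbol{\varepsilon}_1)\big)\Big)\prod_{v=1}^{\infty}E\Big(\exp\big(\tfrac12\lambda_1^{v-1}\boldsymbol{e}_i'\mathbf{S}^{v}\mathbf{M}g(\boldsymbol{\varepsilon}_1)\big)\Big),$$ $$E(Y_t(\boldsymbol{s}_i)^2)=\exp\big(\boldsymbol{e}_i'\mathbf{A}\boldsymbol{\alpha}_1\big)\,E\Big(\varepsilon_1(\boldsymbol{s}_i)^2\exp\big(\rho_0\boldsymbol{e}_i'\mathbf{S}\mathbf{W}_1g(\boldsymbol{\varepsilon}_1)\big)\Big)\prod_{v=1}^{\infty}E\Big(\exp\big(\lambda_1^{v-1}\boldsymbol{e}_i'\mathbf{S}^{v}\mathbf{M}g(\boldsymbol{\varepsilon}_1)\big)\Big),$$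 $$E(Y_t(\boldsymbol{s}_i)Y_t(\boldsymbol{s}_j))=\exp\big(\tfrac12(\boldsymbol{e}_i+\boldsymbol{e}_j)'\mathbf{A}\boldsymbol{\alpha}_1\big)\,E\Big(\varepsilon_1(\boldsymbol{s}_i)\varepsilon_1(\boldsymbol{s}_j)\exp\big(\tfrac12\rho_0(\boldsymbol{e}_i+\boldsymbol{e}_j)'\mathbf{S}\mathbf{W}_1g(\boldsymbol{\varepsilon}_1)\big)\Big)\prod_{v=1}^{\infty}E\Big(\exp\big(\tfrac12\lambda_1^{v-1}(\boldsymbol{e}_i+\boldsymbol{e}_j)'\mathbf{S}^{v}\mathbf{M}g(\boldsymbol{\varepsilon}_1)\big)\Big).$$ None of these quantities depends on $t$.
   Context: Fix $n\ge1$ and known deterministic real $n\times n$ matrices $\mathbf{W}_1,\mathbf{W}_2$. Parameters: $\boldsymbol{\alpha}_1\in\mathbb{R}^n$, $\rho_0,\rho_1,\lambda_0,\lambda_1,\Theta\in\mathbb{R}$, $\xi\ge0$ (standing assumption $|\Theta|<\xi$). Componentwise $g(\boldsymbol{\varepsilon}_t)=\Theta\boldsymbol{\varepsilon}_t+\xi(|\boldsymbol{\varepsilon}_t|-E|\boldsymbol{\varepsilon}_t|)$. Model: $Y_t(\boldsymbol{s}_i)=\sqrt{h_t(\boldsymbol{s}_i)}\,\varepsilon_t(\boldsymbol{s}_i)$ with $\ln\boldsymbol{h}_t=\boldsymbol{\alpha}_1+\rho_0\mathbf{W}_1g(\boldsymbol{\varepsilon}_t)+\rho_1 g(\boldsymbol{\varepsilon}_{t-1})+\lambda_0\mathbf{W}_2\ln\boldsymbol{h}_t+\lambda_1\ln\boldsymbol{h}_{t-1}$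 (componentwise $\ln$). $\mathbf{S}=(\mathbf{I}-\lambda_0\mathbf{W}_2)^{-1}$, $\boldsymbol{\Delta}_t=\mathbf{S}(\boldsymbol{\alpha}_1+\rho_0\mathbf{W}_1g(\boldsymbol{\varepsilon}_t)+\rho_1g(\boldsymbol{\varepsilon}_{t-1}))$. $\varrho(\cdot)$ is spectral radius, $\odot$ Hadamard product, $\boldsymbol{e}_i$ the $i$-th standard unit vector. *)

theory Defs
  imports "HOL-Probability.Probability"
begin

primrec mpow :: "real^'n^'n \<Rightarrow> nat \<Rightarrow> real^'n^'n" where
  "mpow A 0 = mat 1"
| "mpow A (Suc v) = A ** mpow A (v)"

definition spec_rad :: "real^'n^'n \<Rightarrow> real" where
  "spec_rad A = Sup {cmod \<mu> | \<mu>. \<exists>x::complex^'n. x \<noteq> 0 \<and>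
       (\<chi> i j. complex_of_real (A $ i $ j)) *v x = \<mu> *s x}"

definition gfun :: "'a measure \<Rightarrow> (int \<Rightarrow> 'a \<Rightarrow> real^'n) \<Rightarrow> real \<Rightarrow> real \<Rightarrow> int \<Rightarrow> 'a \<Rightarrow> real^'n" where
  "gfun M eps \<Theta> \<xi> t \<omega> = (\<chi> i. \<Theta> * eps t \<omega> $ i
       + \<xi> * (\<bar>eps t \<omega> $ i\<bar> - prob_space.expectation M (\<lambda>\<omega>'. \<bar>eps t \<omega>' $ i\<bar>)))"

definition Smat :: "real \<Rightarrow> real^'n^'n \<Rightarrow> real^'n^'n" where
  "Smat lam0 W2 = matrix_inv (mat 1 - lam0 *\<^sub>R W2)"

definition Delta :: "'a measure \<Rightarrow> (int \<Rightarrow> 'a \<Rightarrow> real^'n) \<Rightarrow> real \<Rightarrow> real \<Rightarrow>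
    real^'n^'n \<Rightarrow> real^'n^'n \<Rightarrow> real^'n \<Rightarrow> real \<Rightarrow> real \<Rightarrow> real \<Rightarrow> int \<Rightarrow> 'a \<Rightarrow> real^'n" where
  "Delta M eps \<Theta> \<xi> W1 W2 alpha1 rho0 rho1 lam0 t \<omega> =
     Smat lam0 W2 *v (alpha1 + rho0 *\<^sub>R (W1 *v gfun M eps \<Theta> \<xi> t \<omega>) + rho1 *\<^sub>R gfun M eps \<Theta> \<xi> (t - 1) \<omega>)"

definition logvol_series :: "'a measure \<Rightarrow> (int \<Rightarrow> 'a \<Rightarrow> real^'n) \<Rightarrow> real \<Rightarrow> real \<Rightarrow>
    real^'n^'n \<Rightarrow> real^'n^'n \<Rightarrow> real^'n \<Rightarrow> real \<Rightarrow> real \<Rightarrow> real \<Rightarrow> real \<Rightarrow> int \<Rightarrow> nat \<Rightarrow> 'a \<Rightarrow> real^'n" where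
  "logvol_series M eps \<Theta> \<xi> W1 W2 alpha1 rho0 rho1 lam0 lam1 t v \<omega> =
     (lam1 ^ v) *\<^sub>R (mpow (Smat lam0 W2) v *v Delta M eps \<Theta> \<xi> W1 W2 alpha1 rho0 rho1 lam0 (t - int v) \<omega>)"

definition Yproc :: "'a measure \<Rightarrow> (int \<Rightarrow> 'a \<Rightarrow> real^'n) \<Rightarrow> real \<Rightarrow> real \<Rightarrow>
    real^'n^'n \<Rightarrow> real^'n^'n \<Rightarrow> real^'n \<Rightarrow> real \<Rightarrow> real \<Rightarrow> real \<Rightarrow> real \<Rightarrow> int \<Rightarrow> 'a \<Rightarrow> real^'n" where
  "Yproc M eps \<Theta> \<xi> W1 W2 alpha1 rho0 rho1 lam0 lam1 t \<omega> =
     (\<chi> i. eps t \<omega> $ i * exp ((1/2) *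
        (\<Sum>v. logvol_series M eps \<Theta> \<xi> W1 W2 alpha1 rho0 rho1 lam0 lam1 t v \<omega>) $ i))"

end

theory Submission
  imports Defs "Jordan_Normal_Form.Spectral_Radius"
begin

text \<open>
  With \<open>B = lam1 S\<close>, the series defining \<open>ln h_t\<close> regroups as
  \<open>ln h_t = A alpha1 + (\<Sum>k. D_k g(eps_(t-k)))\<close>, where \<open>A = (\<Sum>v. B^v) S\<close> is a Neumann series,
  \<open>D_0 = rho0 S W1\<close> and \<open>D_(k+1) = lam1^k S^(k+1) M\<close>. As the spectral radius of \<open>B\<close> is below one,
  the \<open>D_k\<close> decay geometrically, the series converges almost surely, and each moment of \<open>Y_t\<close> is the
  expectation of a polynomial in \<open>eps_t\<close> times an infinite product of independent factors
  \<open>exp (c_k \<bullet> g(eps_(t-k)))\<close>. Since \<open>g\<close> grows linearly and Gaussian noise has exponential moments of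
  every order, these factors are dominated by independent factors \<open>X_k \<ge> 1\<close> with
  \<open>(\<Sum>k. E X_k - 1) < \<infinity>\<close>. Dominated convergence then turns the expectation of the infinite product
  into the product of the expectations, which does not depend on \<open>t\<close>.
\<close>

no_notation Matrix.vec_index (infixl "$" 100)
no_notation Matrix.scalar_prod (infix "\<bullet>" 70)
hide_const (open) Matrix.mat Matrix.vec

section \<open>Powers of a matrix with spectral radius below one\<close>

lemma mpow_Suc_right: "mpow A (Suc k) = mpow A k ** A"
  by (induction k) (simp_all add: matrix_mul_assoc)

lemma mpow_scaleR: "mpow (c *\<^sub>R A) k = c ^ k *\<^sub>R mpow A k"
  by (induction k) (simp_all add: matrix_scalar_ac scalar_matrix_assoc[symmetric])

lemma scaleR_matrix_vector_mult: "(c *\<^sub>R A) *v x = c *\<^sub>R (A *v x)"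
  for A :: "real^'n^'m"
  by (simp add: matrix_scaleR_vector_ac[symmetric] scaleR_matrix_vector_assoc)

lemma matrix_vector_mult_scaleR: "A *v (c *\<^sub>R x) = c *\<^sub>R (A *v x)"
  for A :: "real^'n^'m"
  by (simp add: Finite_Cartesian_Product.vec_eq_iff matrix_vector_mult_def sum_distrib_left mult_ac)

(* C as a complex matrix of the Jordan_Normal_Form library, with its index type enumerated by h;
   this gives access to the library's bound on the powers of a matrix with spectral radius below one. *)
definition jnf_mat :: "(nat \<Rightarrow> 'n::finite) \<Rightarrow> real^'n^'n \<Rightarrow> complex Matrix.mat" where
  "jnf_mat h C = Matrix.mat CARD('n) CARD('n) (\<lambda>(a, b). complex_of_real (C $ h a $ h b))"

lemma jnf_mat_mpow:
  fixes C :: "real^'n^'n"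
  assumes h: "bij_betw h {0..<CARD('n)} UNIV"
  shows "jnf_mat h C ^\<^sub>m k = jnf_mat h (mpow C k)"
proof (induction k)
  case 0
  have "h a = h b \<longleftrightarrow> a = b" if "a < CARD('n)" "b < CARD('n)" for a b
    using h that by (auto simp: bij_betw_def inj_on_def)
  then show ?case
    by (intro eq_matI) (auto simp: jnf_mat_def Finite_Cartesian_Product.mat_def)
next
  case (Suc k)
  have "jnf_mat h C ^\<^sub>m Suc k = jnf_mat h (mpow C k) * jnf_mat h C"
    by (simp add: Suc)
  also have "\<dots> = jnf_mat h (mpow C (Suc k))"
  proof (rule eq_matI)
    fix a b assume ab: "a < dim_row (jnf_mat h (mpow C (Suc k)))" "b < dim_col (jnf_mat h (mpow C (Suc k)))"
    then have "(jnf_mat h (mpow C k) * jnf_mat h C) $$ (a, b)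
        = (\<Sum>l\<in>{0..<CARD('n)}. complex_of_real (mpow C k $ h a $ h l * C $ h l $ h b))"
      by (simp add: jnf_mat_def scalar_prod_def)
    also have "\<dots> = complex_of_real (\<Sum>l\<in>UNIV. mpow C k $ h a $ l * C $ l $ h b)"
      unfolding of_real_sum by (rule sum.reindex_bij_betw[OF h])
    also have "\<dots> = jnf_mat h (mpow C (Suc k)) $$ (a, b)"
      using ab
      by (simp add: jnf_mat_def mpow_Suc_right matrix_matrix_mult_def del: mpow.simps(2))
    finally show "(jnf_mat h (mpow C k) * jnf_mat h C) $$ (a, b) = jnf_mat h (mpow C (Suc k)) $$ (a, b)" .
  qed (simp_all add: jnf_mat_def)
  finally show ?case .
qed

lemma eigenvector_of_jnf_mat:
  fixes C :: "real^'n^'n"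
  assumes h: "bij_betw h {0..<CARD('n)} UNIV"
    and v: "v \<in> carrier_vec CARD('n)" "v \<noteq> 0\<^sub>v CARD('n)" "jnf_mat h C *\<^sub>v v = \<mu> \<cdot>\<^sub>v v"
  obtains x :: "complex^'n" where "x \<noteq> 0" "(\<chi> i j. complex_of_real (C $ i $ j)) *v x = \<mu> *s x"
proof
  define g where "g = inv_into {0..<CARD('n)} h"
  have "i \<in> h ` {0..<CARD('n)}" for i
    using h by (simp add: bij_betw_def)
  then have g: "g i < CARD('n)" "h (g i) = i" for i
    unfolding g_def by (metis atLeastLessThan_iff inv_into_into, metis f_inv_into_f)
  have gh: "a < CARD('n) \<Longrightarrow> g (h a) = a" for a
    using h unfolding g_def by (simp add: bij_betw_def inv_into_f_f)
  have reindex: "(\<Sum>l\<in>UNIV. f l) = (\<Sum>a\<in>{0..<CARD('n)}. f (h a))" for f :: "'n \<Rightarrow> complex"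
    by (rule sum.reindex_bij_betw[OF h, symmetric])
  define x where "x = (\<chi> i. Matrix.vec_index v (g i))"
  show "x \<noteq> 0"
  proof
    assume "x = 0"
    then have "Matrix.vec_index v a = 0" if "a < CARD('n)" for a
      using gh[OF that] by (metis vec_lambda_beta x_def zero_index)
    with v(1,2) show False by (metis carrier_vecD eq_vecI index_zero_vec)
  qed
  show "(\<chi> i j. complex_of_real (C $ i $ j)) *v x = \<mu> *s x"
  proof (subst Finite_Cartesian_Product.vec_eq_iff, intro allI)
    fix i
    have "((\<chi> i j. complex_of_real (C $ i $ j)) *v x) $ i
        = Matrix.vec_index (jnf_mat h C *\<^sub>v v) (g i)"
      using g v(1) by (simp add: matrix_vector_mult_def x_def reindex gh jnf_mat_def scalar_prod_def)
    also have "\<dots> = (\<mu> *s x) $ i"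
      using v g by (simp add: x_def)
    finally show "((\<chi> i j. complex_of_real (C $ i $ j)) *v x) $ i = (\<mu> *s x) $ i" .
  qed
qed

lemma mpow_bounded_if_eigenvalues_in_unit_disc:
  fixes C :: "real^'n^'n"
  assumes "\<And>\<mu> x. x \<noteq> 0 \<Longrightarrow> (\<chi> i j. complex_of_real (C $ i $ j)) *v x = \<mu> *s x \<Longrightarrow> cmod \<mu> < 1"
  obtains c where "\<And>k i j. \<bar>mpow C k $ i $ j\<bar> \<le> c"
proof -
  obtain h where h: "bij_betw h {0..<CARD('n)} (UNIV::'n set)"
    using ex_bij_betw_nat_finite[of "UNIV::'n set"] by auto
  have carrier: "jnf_mat h C \<in> carrier_mat CARD('n) CARD('n)"
    by (simp add: jnf_mat_def)
  obtain \<mu> where \<mu>: "\<mu> \<in> spectrum (jnf_mat h C)" and sr: "spectral_radius (jnf_mat h C) = cmod \<mu>"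
    using spectral_radius_mem_max(1)[OF carrier] by auto
  obtain v where "v \<in> carrier_vec CARD('n)" "v \<noteq> 0\<^sub>v CARD('n)" "jnf_mat h C *\<^sub>v v = \<mu> \<cdot>\<^sub>v v"
    using \<mu> carrier unfolding spectrum_def eigenvalue_def eigenvector_def by auto
  then have "cmod \<mu> < 1"
    by (rule eigenvector_of_jnf_mat[OF h]) (rule assms)
  then have "spectral_radius (jnf_mat h C) < 1"
    by (simp add: sr)
  then obtain c where c: "\<And>k. norm_bound (jnf_mat h C ^\<^sub>m k) c"
    using spectral_radius_jnf_norm_bound_less_1_upper_triangular[OF carrier] by auto
  have surj: "i \<in> h ` {0..<CARD('n)}" for i
    using h by (simp add: bij_betw_def)
  show thesis
  proof
    fix k i j
    obtain a b where "a < CARD('n)" "b < CARD('n)" "i = h a" "j = h b"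
      using surj[of i] surj[of j] by auto
    then show "\<bar>mpow C k $ i $ j\<bar> \<le> c"
      using c[of k] unfolding norm_bound_def jnf_mat_mpow[OF h] by (simp add: jnf_mat_def)
  qed
qed

lemma norm_complex_vector_scalar_mult: "norm (c *s x) = cmod c * norm (x :: complex^'n)"
  by (simp add: norm_vec_def norm_mult L2_set_right_distrib)

lemma eigenvalue_le_spec_rad:
  fixes B :: "real^'n^'n"
  assumes "x \<noteq> 0" "(\<chi> i j. complex_of_real (B $ i $ j)) *v x = \<mu> *s x"
  shows "cmod \<mu> \<le> spec_rad B"
proof -
  let ?Bc = "(\<chi> i j. complex_of_real (B $ i $ j))"
  have "cmod \<nu> \<le> onorm ((*v) ?Bc)"
    if "y \<noteq> 0" "?Bc *v y = \<nu> *s y" for \<nu> and y :: "complex^'n"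
  proof -
    have "cmod \<nu> * norm y \<le> onorm ((*v) ?Bc) * norm y"
      using onorm[OF matrix_vector_mul_bounded_linear, of ?Bc y] that(2)
      by (simp add: norm_complex_vector_scalar_mult)
    then show ?thesis
      using that(1) by simp
  qed
  then have "bdd_above {cmod \<nu> | \<nu>. \<exists>y::complex^'n. y \<noteq> 0 \<and> ?Bc *v y = \<nu> *s y}"
    by (intro bdd_aboveI[of _ "onorm ((*v) ?Bc)"]) blast
  then show ?thesis
    unfolding spec_rad_def using assms by (intro cSup_upper) auto
qed

lemma eigenvalue_scaleR_lt_1:
  fixes B :: "real^'n^'n"
  assumes "spec_rad B < r" "0 < r"
    and "x \<noteq> 0" "(\<chi> i j. complex_of_real (((1 / r) *\<^sub>R B) $ i $ j)) *v x = \<mu> *s x"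
  shows "cmod \<mu> < 1"
proof -
  have "(\<chi> i j. complex_of_real (B $ i $ j)) *v x
      = complex_of_real r *s ((\<chi> i j. complex_of_real (((1 / r) *\<^sub>R B) $ i $ j)) *v x)"
    using assms(2)
    by (simp add: Finite_Cartesian_Product.vec_eq_iff matrix_vector_mult_def sum_divide_distrib[symmetric])
  also have "\<dots> = (complex_of_real r * \<mu>) *s x"
    unfolding assms(4) by (simp add: vector_smult_assoc)
  finally have "cmod (complex_of_real r * \<mu>) \<le> spec_rad B"
    by (rule eigenvalue_le_spec_rad[OF assms(3)])
  then have "r * cmod \<mu> \<le> spec_rad B"
    using assms(2) by (simp add: norm_mult)
  with assms(1) have "r * cmod \<mu> < r * 1"
    by simp
  with assms(2) show ?thesis
    by (simp only: mult_less_cancel_left_pos)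
qed

lemma mpow_decay_if_spec_rad_lt_1:
  fixes B :: "real^'n^'n"
  assumes "spec_rad B < 1"
  obtains c r where "0 < r" "r < 1" "\<And>k x. norm (mpow B k *v x) \<le> c * r ^ k * norm x"
proof -
  define r where "r = (max (spec_rad B) 0 + 1) / 2"
  have r: "0 < r" "r < 1" "spec_rad B < r"
    using assms unfolding r_def by auto
  \<comment> \<open>rescaling by \<open>r\<close> moves every eigenvalue strictly inside the unit disc\<close>
  define C where "C = (1 / r) *\<^sub>R B"
  obtain c where c: "\<And>k i j. \<bar>mpow C k $ i $ j\<bar> \<le> c"
    using mpow_bounded_if_eigenvalues_in_unit_disc eigenvalue_scaleR_lt_1[OF r(3,1)] unfolding C_def by blast
  show thesis
  proof
    fix k x
    have "norm (mpow C k *v x) \<le> onorm ((*v) (mpow C k)) * norm x"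
      by (rule onorm[OF matrix_vector_mul_bounded_linear])
    also have "\<dots> \<le> (real CARD('n) * real CARD('n) * c) * norm x"
      by (rule mult_right_mono[OF onorm_le_matrix_component[OF c]]) simp
    finally have C_bound: "norm (mpow C k *v x) \<le> (real CARD('n) * real CARD('n) * c) * norm x" .
    have "mpow B k = r ^ k *\<^sub>R mpow C k"
      using r(1) by (simp add: C_def mpow_scaleR power_one_over)
    then have "norm (mpow B k *v x) = r ^ k * norm (mpow C k *v x)"
      using r(1) by (simp add: scaleR_matrix_vector_mult)
    also have "\<dots> \<le> r ^ k * ((real CARD('n) * real CARD('n) * c) * norm x)"
      using C_bound r(1) by (simp add: mult_left_mono)
    finally show "norm (mpow B k *v x) \<le> (real CARD('n) * real CARD('n) * c) * r ^ k * norm x"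
      by (simp add: mult_ac)
  qed (use r in auto)
qed

lemma matrix_inv_left: "invertible A \<Longrightarrow> matrix_inv A ** A = mat 1"
  and matrix_inv_right: "invertible A \<Longrightarrow> A ** matrix_inv A = mat 1"
  for A :: "real^'n^'n"
  using someI_ex[of "\<lambda>A'. A ** A' = mat 1 \<and> A' ** A = mat 1"]
  by (auto simp: invertible_def matrix_inv_def)

lemma neumann_series:
  fixes B :: "real^'n^'n"
  assumes decay: "\<And>k x. norm (mpow B k *v x) \<le> c * r ^ k * norm x" and r: "0 \<le> r" "r < 1"
  shows "summable (\<lambda>k. mpow B k *v y)" and "(mat 1 - B) *v (\<Sum>k. mpow B k *v y) = y"
proof -
  have bound: "norm (mpow B k *v y) \<le> c * norm y * r ^ k" for k
    using decay[of k y] by (simp add: mult_ac)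
  show summable: "summable (\<lambda>k. mpow B k *v y)"
    by (rule summable_comparison_test'[OF summable_mult[OF summable_geometric] bound]) (use r in auto)
  have "(\<lambda>k. c * norm y * r ^ k) \<longlonglongrightarrow> 0"
    by (intro tendsto_mult_right_zero LIMSEQ_power_zero) (use r in auto)
  then have "(\<lambda>k. mpow B k *v y) \<longlonglongrightarrow> 0"
    by (rule Lim_null_comparison[rotated]) (use bound in auto)
  then have "(\<lambda>k. mpow B k *v y - mpow B (Suc k) *v y) sums (mpow B 0 *v y - 0)"
    by (rule telescope_sums')
  moreover have "(mat 1 - B) *v (mpow B k *v y) = mpow B k *v y - mpow B (Suc k) *v y" for k
    unfolding matrix_vector_mult_diff_rdistrib by (simp add: matrix_vector_mul_assoc)
  ultimately have "(\<lambda>k. (mat 1 - B) *v (mpow B k *v y)) sums y"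
    by simp
  then show "(mat 1 - B) *v (\<Sum>k. mpow B k *v y) = y"
    using bounded_linear.suminf[OF matrix_vector_mul_bounded_linear summable, of "mat 1 - B"]
    by (simp add: sums_iff)
qed

lemma resolvent_neumann_sums:
  fixes W2 :: "real^'n^'n" and lam0 lam1 :: real
  defines "S \<equiv> Smat lam0 W2"
  assumes inv: "invertible (mat 1 - lam0 *\<^sub>R W2)"
    and decay: "\<And>k x. norm (mpow (lam1 *\<^sub>R S) k *v x) \<le> c * r ^ k * norm x" and r: "0 \<le> r" "r < 1"
  shows "(\<lambda>v. mpow (lam1 *\<^sub>R S) v *v (S *v y)) sums (matrix_inv ((1 - lam1) *\<^sub>R mat 1 - lam0 *\<^sub>R W2) *v y)"
proof -
  define Q where "Q = (1 - lam1) *\<^sub>R mat 1 - lam0 *\<^sub>R W2"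
  define x where "x y = (\<Sum>v. mpow (lam1 *\<^sub>R S) v *v (S *v y))" for y
  have S: "(mat 1 - lam0 *\<^sub>R W2) ** S = mat 1"
    unfolding S_def Smat_def by (rule matrix_inv_right[OF inv])
  have I_minus: "(mat 1 - c *\<^sub>R A) *v v = v - c *\<^sub>R (A *v v)" for c and A :: "real^'n^'n" and v
    by (simp add: matrix_vector_mult_diff_rdistrib scaleR_matrix_vector_mult)
  have Q_factor: "(mat 1 - lam0 *\<^sub>R W2) *v ((mat 1 - lam1 *\<^sub>R S) *v z) = Q *v z" for z
  proof -
    have "(mat 1 - lam0 *\<^sub>R W2) *v ((mat 1 - lam1 *\<^sub>R S) *v z)
        = (mat 1 - lam0 *\<^sub>R W2) *v z - lam1 *\<^sub>R ((mat 1 - lam0 *\<^sub>R W2) *v (S *v z))"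
      by (simp only: I_minus[of lam1 S z] matrix_vector_mult_diff_distrib matrix_vector_mult_scaleR)
    also have "\<dots> = (mat 1 - lam0 *\<^sub>R W2) *v z - lam1 *\<^sub>R z"
      by (simp add: matrix_vector_mul_assoc S)
    also have "\<dots> = Q *v z"
      by (simp add: Q_def I_minus matrix_vector_mult_diff_rdistrib scaleR_matrix_vector_mult algebra_simps)
    finally show ?thesis .
  qed
  have Qx: "Q *v x y = y" for y
    unfolding Q_factor[symmetric] x_def neumann_series(2)[OF decay r] by (simp add: matrix_vector_mul_assoc S)
  then have "invertible Q"
    unfolding invertible_right_inverse matrix_right_invertible_surjective by (metis surjI)
  then have "matrix_inv Q *v y = x y"
    by (metis Qx matrix_inv_left matrix_vector_mul_assoc matrix_vector_mul_lid)
  with neumann_series(1)[OF decay r] show ?thesis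
    unfolding Q_def x_def by (simp add: summable_sums)
qed

section \<open>Infinite sums and products\<close>

lemma sums_add_shifted:
  fixes u w :: "nat \<Rightarrow> 'a::real_normed_vector"
  assumes "u sums a" and "w sums b"
  shows "(\<lambda>k. u k + (case k of 0 \<Rightarrow> 0 | Suc v \<Rightarrow> w v)) sums (a + b)"
proof -
  have "(\<lambda>k. case k of 0 \<Rightarrow> 0 | Suc v \<Rightarrow> w v) sums b"
    using assms(2) sums_Suc_iff[of "\<lambda>k. case k of 0 \<Rightarrow> 0 | Suc v \<Rightarrow> w v" b] by simp
  with assms(1) show ?thesis
    by (rule sums_add)
qed

lemma summable_geometric_shift:
  fixes f :: "nat \<Rightarrow> real"
  assumes "summable (\<lambda>k. r ^ k * f k)" and "0 < r"
  shows "summable (\<lambda>k. r ^ k * f (Suc k))"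
proof -
  have "summable (\<lambda>k. r ^ Suc k * f (Suc k))"
    using summable_Suc_iff[of "\<lambda>k. r ^ k * f k"] assms(1) by simp
  then have "summable (\<lambda>k. (1 / r) * (r ^ Suc k * f (Suc k)))"
    by (rule summable_mult)
  then show ?thesis
    using assms(2) by simp
qed

lemma convergent_prod_tendsto_lessThan:
  fixes c :: "nat \<Rightarrow> real"
  assumes "convergent_prod c"
  shows "(\<lambda>K. \<Prod>k<K. c k) \<longlonglongrightarrow> prodinf c"
proof (rule LIMSEQ_imp_Suc)
  show "(\<lambda>K. \<Prod>k<Suc K. c k) \<longlonglongrightarrow> prodinf c"
    using convergent_prod_LIMSEQ[OF assms] by (simp add: lessThan_Suc_atMost)
qed

lemma prodinf_eq_head_mult:
  fixes c :: "nat \<Rightarrow> real"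
  assumes "convergent_prod c"
  shows "prodinf c = c 0 * (\<Prod>v. c (Suc v))"
  using has_prod_ignore_initial_segment'[OF assms, of 1] by (simp add: has_prod_unique[symmetric])

lemma tendsto_prod_mult_exp_suminf:
  fixes c f :: "nat \<Rightarrow> real"
  assumes "summable f" and "\<And>k. H \<le> k \<Longrightarrow> c k = 1"
  shows "(\<lambda>K. \<Prod>k<K. c k * exp (f k)) \<longlonglongrightarrow> (\<Prod>k<H. c k) * exp (suminf f)"
proof -
  have eq: "(\<Prod>k<H. c k) * exp (\<Sum>k<K. f k) = (\<Prod>k<K. c k * exp (f k))" if "H \<le> K" for K
  proof -
    have "(\<Prod>k<K. c k) = (\<Prod>k<H. c k)"
      using that assms(2) by (intro prod.mono_neutral_right) auto
    then show ?thesis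
      by (simp add: prod.distrib exp_sum)
  qed
  have "(\<lambda>K. (\<Prod>k<H. c k) * exp (\<Sum>k<K. f k)) \<longlonglongrightarrow> (\<Prod>k<H. c k) * exp (suminf f)"
    by (intro tendsto_intros summable_LIMSEQ assms(1))
  moreover have "eventually (\<lambda>K. (\<Prod>k<H. c k) * exp (\<Sum>k<K. f k) = (\<Prod>k<K. c k * exp (f k))) sequentially"
    unfolding eventually_sequentially using eq by blast
  ultimately show ?thesis
    by (rule Lim_transform_eventually)
qed

lemma incseq_prod_ge_1:
  fixes X :: "nat \<Rightarrow> real"
  assumes "\<And>k. 1 \<le> X k"
  shows "incseq (\<lambda>K. \<Prod>k<K. X k)"
proof (rule incseq_SucI)
  fix K
  have "0 \<le> (\<Prod>k<K. X k)"
    using assms by (intro prod_nonneg) (meson order_trans zero_le_one)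
  then show "(\<Prod>k<K. X k) \<le> (\<Prod>k<Suc K. X k)"
    using mult_left_mono[OF assms[of K]] by simp
qed

lemma abs_exp_minus_one_le:
  fixes x t y :: real
  assumes "\<bar>x\<bar> \<le> t * y" "0 \<le> t" "t \<le> 1" "0 \<le> y"
  shows "\<bar>exp x - 1\<bar> \<le> t * (y * exp y)"
proof -
  have "\<bar>exp x - 1\<bar> \<le> \<bar>x\<bar> * exp \<bar>x\<bar>"
  proof (cases "0 \<le> x")
    case True
    have "exp x * (1 - x) \<le> exp x * exp (- x)"
      using exp_ge_add_one_self[of "- x"] by (intro mult_left_mono) auto
    then show ?thesis
      using True by (simp add: exp_minus field_simps)
  next
    case False
    have "1 - exp x \<le> - x"
      using exp_ge_add_one_self[of x] by linarith
    also have "\<dots> \<le> - x * exp (- x)"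
      using False mult_left_mono[of 1 "exp (- x)" "- x"] by simp
    finally show ?thesis
      using False by simp
  qed
  also have "\<dots> \<le> (t * y) * exp y"
  proof (rule mult_mono)
    show "exp \<bar>x\<bar> \<le> exp y"
      using assms mult_left_le_one_le[of y t] by simp
  qed (use assms in auto)
  finally show ?thesis
    by (simp add: mult.assoc)
qed

section \<open>Independent random variables\<close>

lemma borel_measurable_vecI:
  fixes f :: "'a \<Rightarrow> real^'n"
  assumes "\<And>i. (\<lambda>x. f x $ i) \<in> borel_measurable M"
  shows "f \<in> borel_measurable M"
  unfolding borel_measurable_euclidean_space[where f=f]
  using assms by (auto simp: Basis_vec_def inner_axis)

lemma borel_measurable_matrix_vector_mult[measurable (raw)]:
  fixes A :: "real^'n^'m"
  assumes [measurable]: "f \<in> borel_measurable M"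
  shows "(\<lambda>x. A *v f x) \<in> borel_measurable M"
proof (rule borel_measurable_vecI)
  fix i
  have [measurable]: "(\<lambda>x. f x $ j) \<in> borel_measurable M" for j
    using measurable_compose[OF assms borel_measurable_nth] by simp
  show "(\<lambda>x. (A *v f x) $ i) \<in> borel_measurable M"
    unfolding matrix_vector_mult_def vec_lambda_beta by measurable
qed

context prob_space
begin

lemma integrable_lim_prod_indep:
  fixes X :: "nat \<Rightarrow> 'a \<Rightarrow> real"
  assumes indep: "indep_vars (\<lambda>_. borel) X UNIV" and int: "\<And>k. integrable M (X k)"
    and ge_1: "\<And>k \<omega>. 1 \<le> X k \<omega>" and summable: "summable (\<lambda>k. expectation (X k) - 1)"
    and lim: "AE \<omega> in M. (\<lambda>K. \<Prod>k<K. X k \<omega>) \<longlonglongrightarrow> \<Psi> \<omega>" and [measurable]: "\<Psi> \<in> borel_measurable M"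
  shows "integrable M \<Psi>"
proof (rule integrable_monotone_convergence)
  have indep_K: "indep_vars (\<lambda>_. borel) X {..<K}" for K
    by (rule indep_vars_subset[OF indep]) simp
  show "integrable M (\<lambda>\<omega>. \<Prod>k<K. X k \<omega>)" for K
    by (rule indep_vars_integrable[OF _ indep_K int]) simp
  show "AE \<omega> in M. mono (\<lambda>K. \<Prod>k<K. X k \<omega>)"
    using ge_1 by (intro AE_I2 incseq_prod_ge_1)
  have E_ge_1: "1 \<le> expectation (X k)" for k
    using integral_mono[OF integrable_const int, of 1 k] ge_1 by (simp add: prob_space)
  have "convergent_prod (\<lambda>k. 1 + (expectation (X k) - 1))"
  proof (rule summable_imp_convergent_prod_real)
    show "summable (\<lambda>k. \<bar>expectation (X k) - 1\<bar>)"
      using summable E_ge_1 by simp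
    show "expectation (X k) - 1 \<noteq> - 1" for k
      using E_ge_1[of k] by simp
  qed
  then have "(\<lambda>K. \<Prod>k<K. expectation (X k)) \<longlonglongrightarrow> (\<Prod>k. expectation (X k))"
    by (intro convergent_prod_tendsto_lessThan) simp
  then show "(\<lambda>K. expectation (\<lambda>\<omega>. \<Prod>k<K. X k \<omega>)) \<longlonglongrightarrow> (\<Prod>k. expectation (X k))"
    by (subst indep_vars_lebesgue_integral[OF _ indep_K int]) simp_all
qed (use lim in auto)

lemma tendsto_prod_expectation_indep:
  fixes X Y :: "nat \<Rightarrow> 'a \<Rightarrow> real"
  assumes indep_X: "indep_vars (\<lambda>_. borel) X UNIV" and indep_Y: "indep_vars (\<lambda>_. borel) Y UNIV"
    and int_X: "\<And>k. integrable M (X k)" and [measurable]: "\<And>k. Y k \<in> borel_measurable M"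
    and ge_1: "\<And>k \<omega>. 1 \<le> X k \<omega>" and dominated: "\<And>k \<omega>. \<bar>Y k \<omega>\<bar> \<le> X k \<omega>"
    and summable: "summable (\<lambda>k. expectation (X k) - 1)"
    and lim_X: "AE \<omega> in M. (\<lambda>K. \<Prod>k<K. X k \<omega>) \<longlonglongrightarrow> \<Psi> \<omega>" and [measurable]: "\<Psi> \<in> borel_measurable M"
    and lim_Y: "AE \<omega> in M. (\<lambda>K. \<Prod>k<K. Y k \<omega>) \<longlonglongrightarrow> \<Phi> \<omega>" and [measurable]: "\<Phi> \<in> borel_measurable M"
  shows "integrable M \<Phi>" and "(\<lambda>K. \<Prod>k<K. expectation (Y k)) \<longlonglongrightarrow> expectation \<Phi>"
proof -
  have int_\<Psi>: "integrable M \<Psi>"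
    by (rule integrable_lim_prod_indep[OF indep_X int_X ge_1 summable lim_X]) simp
  have int_Y: "integrable M (Y k)" for k
  proof (rule Bochner_Integration.integrable_bound[OF int_X])
    show "AE \<omega> in M. norm (Y k \<omega>) \<le> norm (X k \<omega>)"
      using dominated by (auto intro!: AE_I2 order_trans[OF _ abs_ge_self])
  qed measurable
  have bound: "AE \<omega> in M. norm (\<Prod>k<K. Y k \<omega>) \<le> \<Psi> \<omega>" for K
    using lim_X
  proof eventually_elim
    case (elim \<omega>)
    have "norm (\<Prod>k<K. Y k \<omega>) \<le> (\<Prod>k<K. X k \<omega>)"
      unfolding real_norm_def abs_prod by (intro prod_mono) (auto intro: dominated)
    also have "\<dots> \<le> \<Psi> \<omega>"
      using ge_1 by (intro incseq_le[OF incseq_prod_ge_1 elim])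
    finally show ?case .
  qed
  show "integrable M \<Phi>"
    by (rule integrable_dominated_convergence[OF _ _ int_\<Psi> lim_Y bound]) simp_all
  have "(\<lambda>K. expectation (\<lambda>\<omega>. \<Prod>k<K. Y k \<omega>)) \<longlonglongrightarrow> expectation \<Phi>"
    by (rule integral_dominated_convergence[OF _ _ int_\<Psi> lim_Y bound]) simp_all
  moreover have "expectation (\<lambda>\<omega>. \<Prod>k<K. Y k \<omega>) = (\<Prod>k<K. expectation (Y k))" for K
    by (rule indep_vars_lebesgue_integral[OF _ indep_vars_subset[OF indep_Y] int_Y]) simp_all
  ultimately show "(\<lambda>K. \<Prod>k<K. expectation (Y k)) \<longlonglongrightarrow> expectation \<Phi>"
    by simp
qed

lemma indep_sets_reindex:
  assumes indep: "indep_sets F (g ` I)" and inj: "inj_on g I"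
  shows "indep_sets (\<lambda>i. F (g i)) I"
proof (rule indep_setsI)
  show "F (g i) \<subseteq> events" if "i \<in> I" for i
    using indep that unfolding indep_sets_def by blast
  fix A J assume J: "J \<noteq> {}" "J \<subseteq> I" "finite J" "\<forall>j\<in>J. A j \<in> F (g j)"
  define A' where "A' k = A (the_inv_into I g k)" for k
  have A': "A' (g j) = A j" if "j \<in> J" for j
    using inj J that by (auto simp: A'_def the_inv_into_f_f)
  have "prob (\<Inter>k\<in>g ` J. A' k) = (\<Prod>k\<in>g ` J. prob (A' k))"
    by (rule indep_setsD[OF indep]) (use J A' in auto)
  moreover have "(\<Inter>k\<in>g ` J. A' k) = (\<Inter>j\<in>J. A j)"
    using A' by auto
  moreover have "(\<Prod>k\<in>g ` J. prob (A' k)) = (\<Prod>j\<in>J. prob (A j))"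
    using inj J by (subst prod.reindex) (auto intro: inj_on_subset simp: A')
  ultimately show "prob (\<Inter>j\<in>J. A j) = (\<Prod>j\<in>J. prob (A j))"
    by simp
qed

lemma indep_vars_reindex:
  assumes "indep_vars M' X (g ` I)" and "inj_on g I"
  shows "indep_vars (\<lambda>i. M' (g i)) (\<lambda>i. X (g i)) I"
  using assms indep_sets_reindex[of "\<lambda>i. {X i -` A \<inter> space M |A. A \<in> sets (M' i)}" g I]
  unfolding indep_vars_def2 by auto

end

lemma (in prob_space) indep_vars_vec:
  fixes X :: "'i \<times> 'n::finite \<Rightarrow> 'a \<Rightarrow> real"
  assumes "indep_vars (\<lambda>_. borel) X UNIV"
  shows "indep_vars (\<lambda>_. borel) (\<lambda>s \<omega>. (\<chi> i. X (s, i) \<omega>) :: real^'n) UNIV"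
proof -
  have "indep_vars (\<lambda>s. PiM ({s} \<times> UNIV) (\<lambda>_. borel)) (\<lambda>s \<omega>. restrict (\<lambda>k. X k \<omega>) ({s} \<times> UNIV)) UNIV"
    by (rule indep_vars_restrict[OF assms]) (auto simp: disjoint_family_on_def)
  then have "indep_vars (\<lambda>_. borel)
      (\<lambda>s \<omega>. (\<lambda>x. (\<chi> i. x (s, i)) :: real^'n) (restrict (\<lambda>k. X k \<omega>) ({s} \<times> UNIV))) UNIV"
    by (rule indep_vars_compose2) (rule borel_measurable_vecI, simp)
  then show ?thesis
    by simp
qed

section \<open>Products of independent Gaussian factors\<close>

lemma std_normal_density_mult_exp:
  "std_normal_density x * exp (c * x) = exp (c\<^sup>2 / 2) * normal_density c 1 x"
proof -
  have "- x\<^sup>2 / 2 + c * x = c\<^sup>2 / 2 + (- (x - c)\<^sup>2 / 2)"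
    by (simp add: power2_eq_square field_simps)
  then show ?thesis
    by (simp add: normal_density_def exp_add[symmetric] mult.commute mult.left_commute)
qed

lemma integrable_std_normal_exp_abs: "integrable lborel (\<lambda>x. std_normal_density x * exp (b * \<bar>x\<bar>))"
proof (rule Bochner_Integration.integrable_bound)
  let ?c = "\<bar>b\<bar>"
  show "integrable lborel (\<lambda>x. std_normal_density x * exp (?c * x) + std_normal_density x * exp (- ?c * x))"
    unfolding std_normal_density_mult_exp
    by (intro Bochner_Integration.integrable_add integrable_mult_right integrable_normal_density) simp_all
  have "exp (b * \<bar>x\<bar>) \<le> exp (?c * x) + exp (- ?c * x)" for x
  proof -
    have "b * \<bar>x\<bar> \<le> ?c * x \<or> b * \<bar>x\<bar> \<le> - ?c * x"
      by (cases "x \<ge> 0"; cases "b \<ge> 0") (auto simp: mult_le_cancel_right)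
    then show ?thesis
      by (smt (verit) exp_gt_zero exp_le_cancel_iff)
  qed
  then have "std_normal_density x * exp (b * \<bar>x\<bar>)
      \<le> std_normal_density x * exp (?c * x) + std_normal_density x * exp (- ?c * x)" for x
    unfolding distrib_left[symmetric] by (intro mult_left_mono) auto
  then show "AE x in lborel. norm (std_normal_density x * exp (b * \<bar>x\<bar>))
      \<le> norm (std_normal_density x * exp (?c * x) + std_normal_density x * exp (- ?c * x))"
    by (intro AE_I2) (simp add: abs_of_nonneg add_nonneg_nonneg)
qed simp

(* The dominating factors of the dominated convergence argument in expectation_prod_exp_series. *)
definition majorant :: "nat \<Rightarrow> nat \<Rightarrow> real \<Rightarrow> real \<Rightarrow> nat \<Rightarrow> real^'n \<Rightarrow> real" where
  "majorant H p a r k z = (if k < H then 1 + (1 + norm z) ^ p else 1) * exp (a * r ^ k * (1 + norm z))"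

lemma measurable_majorant[measurable]: "majorant H p a r k \<in> borel_measurable borel"
  unfolding majorant_def by measurable

lemma one_le_majorant:
  assumes "0 \<le> a" "0 \<le> r"
  shows "1 \<le> majorant H p a r k z"
proof -
  have "1 \<le> (if k < H then 1 + (1 + norm z) ^ p else 1)" and "1 \<le> exp (a * r ^ k * (1 + norm z))"
    using assms by auto
  then show ?thesis
    unfolding majorant_def using mult_mono[of 1 _ 1] by fastforce
qed

lemma abs_le_majorant:
  assumes "\<bar>P\<bar> \<le> (1 + norm z) ^ p" and "H \<le> k \<Longrightarrow> P = 1" and "\<bar>e\<bar> \<le> a * r ^ k * (1 + norm z)"
  shows "\<bar>P * exp e\<bar> \<le> majorant H p a r k z"
proof -
  have "\<bar>P\<bar> \<le> (if k < H then 1 + (1 + norm z) ^ p else 1)"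
    using assms(1,2) by auto
  with assms(3) show ?thesis
    unfolding majorant_def abs_mult by (intro mult_mono) auto
qed

lemma majorant_le_exp:
  assumes "0 \<le> a" "0 \<le> r" "r \<le> 1"
  shows "majorant H p a r k z \<le> 2 * exp a * exp ((real p + a) * norm z)"
proof -
  have "(if k < H then 1 + (1 + norm z) ^ p else 1) \<le> 1 + (1 + norm z) ^ p"
    by simp
  also have "\<dots> \<le> 1 + exp (norm z) ^ p"
    by (intro add_left_mono power_mono) (auto simp: add.commute)
  also have "\<dots> \<le> 2 * exp (norm z) ^ p"
    using one_le_power[of "exp (norm z)" p] by simp
  finally have "(if k < H then 1 + (1 + norm z) ^ p else 1) \<le> 2 * exp (real p * norm z)"
    by (simp add: exp_of_nat_mult)
  moreover have "exp (a * r ^ k * (1 + norm z)) \<le> exp a * exp (a * norm z)"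
    using assms mult_left_le_one_le[of "a * (1 + norm z)" "r ^ k"]
    by (simp add: power_le_one algebra_simps exp_add[symmetric])
  ultimately have "majorant H p a r k z \<le> 2 * exp (real p * norm z) * (exp a * exp (a * norm z))"
    unfolding majorant_def by (intro mult_mono) auto
  also have "\<dots> = 2 * exp a * exp ((real p + a) * norm z)"
    by (simp add: algebra_simps exp_add)
  finally show ?thesis .
qed

locale std_normal_noise = prob_space M for M :: "'a measure" +
  fixes eps :: "int \<Rightarrow> 'a \<Rightarrow> real^'n::finite"
  assumes indep_components: "indep_vars (\<lambda>_. borel) (\<lambda>(t, i) \<omega>. eps t \<omega> $ i) UNIV"
    and std_normal: "\<And>t i. distributed M lborel (\<lambda>\<omega>. eps t \<omega> $ i) std_normal_density"
begin

lemma measurable_eps_component[measurable]: "(\<lambda>\<omega>. eps t \<omega> $ i) \<in> borel_measurable M"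
  using distributed_measurable[OF std_normal[of t i]] by simp

lemma measurable_eps[measurable]: "eps t \<in> borel_measurable M"
  by (rule borel_measurable_vecI) simp

lemma indep_vars_eps_components: "indep_vars (\<lambda>_. borel) (\<lambda>i \<omega>. eps t \<omega> $ i) UNIV"
  using indep_vars_reindex[of "\<lambda>_. borel" "\<lambda>(t, i) \<omega>. eps t \<omega> $ i" "Pair t" UNIV]
    indep_vars_subset[OF indep_components, of "range (Pair t)"]
  by (simp add: inj_on_def)

lemma indep_vars_fun_eps:
  assumes "inj \<sigma>" and "\<And>k. f k \<in> borel_measurable borel"
  shows "indep_vars (\<lambda>_. borel) (\<lambda>k \<omega>. f k (eps (\<sigma> k) \<omega>) :: real) UNIV"
proof -
  have "indep_vars (\<lambda>_. borel) eps UNIV"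
    using indep_vars_vec[OF indep_components] by simp
  then have "indep_vars (\<lambda>_. borel) (\<lambda>k. eps (\<sigma> k)) UNIV"
    using indep_vars_reindex[of "\<lambda>_. borel" eps \<sigma> UNIV] indep_vars_subset[of _ _ UNIV "range \<sigma>"] assms(1)
    by auto
  then show ?thesis
    by (rule indep_vars_compose2) (use assms(2) in auto)
qed

lemma distr_eps:
  "distr M borel (eps t) = distr (PiM UNIV (\<lambda>_::'n. density lborel std_normal_density)) borel (\<lambda>x. \<chi> i. x i)"
proof -
  have "distr M borel (\<lambda>\<omega>. eps t \<omega> $ i) = distr M lborel (\<lambda>\<omega>. eps t \<omega> $ i)" for i
    by (rule distr_cong) auto
  then have "distr M borel (\<lambda>\<omega>. eps t \<omega> $ i) = density lborel std_normal_density" for i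
    using distributed_distr_eq_density[OF std_normal[of t i]] by simp
  then have product: "distr M (PiM UNIV (\<lambda>_. borel)) (\<lambda>\<omega>. \<lambda>i\<in>UNIV. eps t \<omega> $ i)
      = PiM UNIV (\<lambda>_::'n. density lborel std_normal_density)"
    using indep_vars_iff_distr_eq_PiM[of UNIV "\<lambda>i \<omega>. eps t \<omega> $ i" "\<lambda>_. borel"] indep_vars_eps_components
    by simp
  have eps_eq: "eps t = (\<lambda>x. (\<chi> i. x i) :: real^'n) \<circ> (\<lambda>\<omega>. \<lambda>i\<in>UNIV. eps t \<omega> $ i)"
    by (simp add: fun_eq_iff restrict_def)
  have "(\<lambda>x. (\<chi> i. x i) :: real^'n) \<in> measurable (PiM UNIV (\<lambda>_::'n. borel)) borel"
    by (rule borel_measurable_vecI) simp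
  moreover have "(\<lambda>\<omega>. \<lambda>i\<in>UNIV. eps t \<omega> $ i) \<in> measurable M (PiM UNIV (\<lambda>_::'n. borel))"
    by measurable
  ultimately show ?thesis
    by (subst eps_eq) (simp add: distr_distr[symmetric] product)
qed

lemma integral_eps_eq:
  fixes f :: "real^'n \<Rightarrow> real"
  assumes [measurable]: "f \<in> borel_measurable borel"
  shows "expectation (\<lambda>\<omega>. f (eps t \<omega>)) = expectation (\<lambda>\<omega>. f (eps s \<omega>))"
  using integral_distr[OF measurable_eps[of t] assms] integral_distr[OF measurable_eps[of s] assms]
  by (simp add: distr_eps)

lemma integrable_exp_norm_eps:
  assumes "0 \<le> a"
  shows "integrable M (\<lambda>\<omega>. exp (a * norm (eps t \<omega>)))"
proof (rule Bochner_Integration.integrable_bound)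
  have "indep_vars (\<lambda>_. borel) (\<lambda>i \<omega>. exp (a * \<bar>eps t \<omega> $ i\<bar>)) UNIV"
    by (rule indep_vars_compose2[OF indep_vars_eps_components]) simp
  moreover have "integrable M (\<lambda>\<omega>. exp (a * \<bar>eps t \<omega> $ i\<bar>))" for i
    using distributed_integrable[OF std_normal[of t i], of "\<lambda>x. exp (a * \<bar>x\<bar>)"]
      integrable_std_normal_exp_abs[of a]
    by simp
  ultimately show "integrable M (\<lambda>\<omega>. \<Prod>i\<in>UNIV. exp (a * \<bar>eps t \<omega> $ i\<bar>))"
    by (intro indep_vars_integrable) auto
  have "a * norm z \<le> (\<Sum>i\<in>UNIV. a * \<bar>z $ i\<bar>)" for z :: "real^'n"
    using mult_left_mono[OF norm_le_l1_cart assms] by (simp add: sum_distrib_left)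
  then show "AE \<omega> in M. norm (exp (a * norm (eps t \<omega>))) \<le> norm (\<Prod>i\<in>UNIV. exp (a * \<bar>eps t \<omega> $ i\<bar>))"
    by (intro AE_I2) (simp add: exp_sum[symmetric])
qed simp

lemma integrable_eps_if_exp_bound:
  fixes f :: "real^'n \<Rightarrow> real"
  assumes [measurable]: "f \<in> borel_measurable borel" and "0 \<le> a"
    and bound: "\<And>z. \<bar>f z\<bar> \<le> C * exp (a * norm z)"
  shows "integrable M (\<lambda>\<omega>. f (eps t \<omega>))"
proof (rule Bochner_Integration.integrable_bound)
  show "integrable M (\<lambda>\<omega>. C * exp (a * norm (eps t \<omega>)))"
    by (intro integrable_mult_right integrable_exp_norm_eps assms(2))
  show "AE \<omega> in M. norm (f (eps t \<omega>)) \<le> norm (C * exp (a * norm (eps t \<omega>)))"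
    using bound by (auto intro!: AE_I2 order_trans[OF _ abs_ge_self])
qed simp

lemma AE_summable_geometric_norm_eps:
  assumes r: "0 \<le> r" "r < 1"
  shows "AE \<omega> in M. summable (\<lambda>k. r ^ k * (1 + norm (eps (\<sigma> k) \<omega>)))"
proof -
  define m where "m = expectation (\<lambda>\<omega>. 1 + norm (eps 1 \<omega>))"
  have int: "integrable M (\<lambda>\<omega>. 1 + norm (eps t \<omega>))" for t
    by (rule integrable_eps_if_exp_bound[where a=1 and C=1])
      (auto intro: order_trans[OF _ exp_ge_add_one_self])
  have "(\<integral>\<^sup>+\<omega>. ennreal (r ^ k * (1 + norm (eps (\<sigma> k) \<omega>))) \<partial>M) = ennreal (r ^ k * m)" for k
  proof -
    have "expectation (\<lambda>\<omega>. 1 + norm (eps (\<sigma> k) \<omega>)) = m"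
      unfolding m_def by (rule integral_eps_eq) simp
    then show ?thesis
      using r int by (subst nn_integral_eq_integral) auto
  qed
  then have "(\<integral>\<^sup>+\<omega>. (\<Sum>k. ennreal (r ^ k * (1 + norm (eps (\<sigma> k) \<omega>)))) \<partial>M) = (\<Sum>k. ennreal (r ^ k * m))"
    by (subst nn_integral_suminf) auto
  also have "\<dots> = ennreal (\<Sum>k. r ^ k * m)"
    using r int[of 1] unfolding m_def
    by (intro suminf_ennreal2) (auto intro!: summable_mult2 summable_geometric integral_nonneg_AE)
  finally have "AE \<omega> in M. (\<Sum>k. ennreal (r ^ k * (1 + norm (eps (\<sigma> k) \<omega>)))) \<noteq> \<infinity>"
    by (intro nn_integral_PInf_AE) auto
  then show ?thesis
    by (rule AE_mp) (use r in \<open>auto intro!: AE_I2 summable_suminf_not_top\<close>)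
qed

lemma integrable_mult_exp_norm_eps:
  assumes "0 \<le> a"
  shows "integrable M (\<lambda>\<omega>. a * (1 + norm (eps s \<omega>)) * exp (a * (1 + norm (eps s \<omega>))))"
proof (rule integrable_eps_if_exp_bound[where a="2 * a" and C="exp (2 * a)"])
  fix z :: "real^'n"
  have "\<bar>a * (1 + norm z) * exp (a * (1 + norm z))\<bar> \<le> exp (a * (1 + norm z)) * exp (a * (1 + norm z))"
    using assms by (intro order_trans[OF _ mult_right_mono[OF exp_ge_add_one_self]]) auto
  then show "\<bar>a * (1 + norm z) * exp (a * (1 + norm z))\<bar> \<le> exp (2 * a) * exp (2 * a * norm z)"
    by (simp add: exp_add[symmetric] algebra_simps)
qed (use assms in auto)

lemma summable_expectation_exp_minus_one:
  fixes e :: "nat \<Rightarrow> real^'n \<Rightarrow> real"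
  assumes [measurable]: "\<And>k. e k \<in> borel_measurable borel"
    and bound: "\<And>k z. \<bar>e k z\<bar> \<le> a * r ^ k * (1 + norm z)" and a: "0 \<le> a" and r: "0 \<le> r" "r < 1"
  shows "summable (\<lambda>k. \<bar>expectation (\<lambda>\<omega>. exp (e k (eps s \<omega>))) - 1\<bar>)"
proof -
  define g where "g z = a * (1 + norm z) * exp (a * (1 + norm z))" for z :: "real^'n"
  have int_g: "integrable M (\<lambda>\<omega>. g (eps s \<omega>))"
    unfolding g_def using a by (rule integrable_mult_exp_norm_eps)
  have rk: "r ^ k \<le> 1" for k
    using r by (simp add: power_le_one)
  have "exp (e k z) \<le> exp a * exp (a * norm z)" for k z
    using bound[of k z] mult_left_le_one_le[of "a * (1 + norm z)" "r ^ k"] a r rk[of k]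
    by (simp add: algebra_simps exp_add[symmetric])
  then have int_exp: "integrable M (\<lambda>\<omega>. exp (e k (eps s \<omega>)))" for k
    using a by (intro integrable_eps_if_exp_bound[where a=a and C="exp a"]) auto
  have pointwise: "\<bar>exp (e k z) - 1\<bar> \<le> r ^ k * g z" for k z
    unfolding g_def using bound[of k z] a r rk[of k]
    by (intro abs_exp_minus_one_le) (auto simp: mult_ac)
  show ?thesis
  proof (rule summable_comparison_test'[where N=0])
    show "summable (\<lambda>k. r ^ k * expectation (\<lambda>\<omega>. g (eps s \<omega>)))"
      using r by (intro summable_mult2 summable_geometric) auto
    fix k
    have "\<bar>expectation (\<lambda>\<omega>. exp (e k (eps s \<omega>))) - 1\<bar> = \<bar>expectation (\<lambda>\<omega>. exp (e k (eps s \<omega>)) - 1)\<bar>"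
      using int_exp[of k] by (simp add: prob_space)
    also have "\<dots> \<le> expectation (\<lambda>\<omega>. \<bar>exp (e k (eps s \<omega>)) - 1\<bar>)"
      by (rule integral_abs_bound)
    also have "\<dots> \<le> expectation (\<lambda>\<omega>. r ^ k * g (eps s \<omega>))"
      using int_exp int_g by (intro integral_mono pointwise) auto
    finally show "norm \<bar>expectation (\<lambda>\<omega>. exp (e k (eps s \<omega>))) - 1\<bar> \<le> r ^ k * expectation (\<lambda>\<omega>. g (eps s \<omega>))"
      by simp
  qed
qed

lemma convergent_prod_expectation_exp:
  fixes e :: "nat \<Rightarrow> real^'n \<Rightarrow> real"
  assumes "\<And>k. e k \<in> borel_measurable borel"
    and "\<And>k z. \<bar>e k z\<bar> \<le> a * r ^ k * (1 + norm z)" and "0 \<le> a" "0 \<le> r" "r < 1"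
  shows "convergent_prod (\<lambda>k. expectation (\<lambda>\<omega>. exp (e k (eps s \<omega>))))"
  using summable_expectation_exp_minus_one[OF assms]
  by (intro abs_convergent_prod_imp_convergent_prod summable_imp_abs_convergent_prod) simp

lemma integrable_majorant_eps:
  assumes "0 \<le> a" "0 \<le> r" "r \<le> 1"
  shows "integrable M (\<lambda>\<omega>. majorant H p a r k (eps s \<omega>))"
proof (rule integrable_eps_if_exp_bound[where a="real p + a" and C="2 * exp a"])
  fix z :: "real^'n"
  have "0 \<le> majorant H p a r k z"
    using one_le_majorant[OF assms(1,2)] by (rule order_trans[OF zero_le_one])
  then show "\<bar>majorant H p a r k z\<bar> \<le> 2 * exp a * exp ((real p + a) * norm z)"
    using majorant_le_exp[OF assms] by simp
qed (use assms in auto)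

lemma summable_expectation_majorant:
  assumes "0 \<le> a" "0 \<le> r" "r < 1"
  shows "summable (\<lambda>k. expectation (\<lambda>\<omega>. majorant H p a r k (eps s \<omega>)) - 1)"
proof -
  have "expectation (\<lambda>\<omega>. majorant H p a r k (eps s \<omega>))
      = expectation (\<lambda>\<omega>. exp (a * r ^ k * (1 + norm (eps s \<omega>))))" if "H \<le> k" for k
    using that by (simp add: majorant_def)
  then have "eventually (\<lambda>k. \<bar>expectation (\<lambda>\<omega>. exp (a * r ^ k * (1 + norm (eps s \<omega>)))) - 1\<bar>
      = \<bar>expectation (\<lambda>\<omega>. majorant H p a r k (eps s \<omega>)) - 1\<bar>) sequentially"
    unfolding eventually_sequentially by (intro exI[of _ H] allI impI) (simp only:)
  moreover have "summable (\<lambda>k. \<bar>expectation (\<lambda>\<omega>. exp (a * r ^ k * (1 + norm (eps s \<omega>)))) - 1\<bar>)"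
    using assms by (intro summable_expectation_exp_minus_one) (auto simp: abs_of_nonneg)
  ultimately have "summable (\<lambda>k. \<bar>expectation (\<lambda>\<omega>. majorant H p a r k (eps s \<omega>)) - 1\<bar>)"
    by (rule summable_cong[THEN iffD1])
  then show ?thesis
    by (rule summable_rabs_cancel)
qed

lemma AE_tendsto_prod_exp_series:
  fixes P e :: "nat \<Rightarrow> real^'n \<Rightarrow> real"
  assumes P_1: "\<And>k z. H \<le> k \<Longrightarrow> P k z = 1"
    and e_bound: "\<And>k z. \<bar>e k z\<bar> \<le> a * r ^ k * (1 + norm z)" and r: "0 \<le> r" "r < 1"
  shows "AE \<omega> in M. (\<lambda>K. \<Prod>k<K. P k (eps (\<sigma> k) \<omega>) * exp (e k (eps (\<sigma> k) \<omega>)))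
    \<longlonglongrightarrow> (\<Prod>k<H. P k (eps (\<sigma> k) \<omega>)) * exp (\<Sum>k. e k (eps (\<sigma> k) \<omega>))"
  using AE_summable_geometric_norm_eps[OF r, of \<sigma>]
proof eventually_elim
  case (elim \<omega>)
  then have "summable (\<lambda>k. a * (r ^ k * (1 + norm (eps (\<sigma> k) \<omega>))))"
    by (rule summable_mult)
  then have "summable (\<lambda>k. e k (eps (\<sigma> k) \<omega>))"
    by (rule summable_comparison_test'[where N=0]) (use e_bound in \<open>simp add: mult.assoc\<close>)
  then show ?case
    by (rule tendsto_prod_mult_exp_suminf) (rule P_1)
qed

lemma expectation_prod_exp_series:
  fixes P e :: "nat \<Rightarrow> real^'n \<Rightarrow> real" and \<sigma> :: "nat \<Rightarrow> int"
  assumes inj: "inj \<sigma>"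
    and [measurable]: "\<And>k. P k \<in> borel_measurable borel" "\<And>k. e k \<in> borel_measurable borel"
    and P_bound: "\<And>k z. \<bar>P k z\<bar> \<le> (1 + norm z) ^ p" and P_1: "\<And>k z. H \<le> k \<Longrightarrow> P k z = 1"
    and e_bound: "\<And>k z. \<bar>e k z\<bar> \<le> a * r ^ k * (1 + norm z)" and a: "0 \<le> a" and r: "0 \<le> r" "r < 1"
  defines "\<Phi> \<equiv> \<lambda>\<omega>. (\<Prod>k<H. P k (eps (\<sigma> k) \<omega>)) * exp (\<Sum>k. e k (eps (\<sigma> k) \<omega>))"
  shows "integrable M \<Phi>"
    and "(\<lambda>K. \<Prod>k<K. expectation (\<lambda>\<omega>. P k (eps 1 \<omega>) * exp (e k (eps 1 \<omega>)))) \<longlonglongrightarrow> expectation \<Phi>"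
proof -
  define X where "X k \<omega> = majorant H p a r k (eps (\<sigma> k) \<omega>)" for k \<omega>
  define Y where "Y k \<omega> = P k (eps (\<sigma> k) \<omega>) * exp (e k (eps (\<sigma> k) \<omega>))" for k \<omega>
  define \<Psi> where "\<Psi> \<omega> = (\<Prod>k<H. if k < H then 1 + (1 + norm (eps (\<sigma> k) \<omega>)) ^ p else 1)
      * exp (\<Sum>k. a * r ^ k * (1 + norm (eps (\<sigma> k) \<omega>)))" for \<omega>
  have indep_X: "indep_vars (\<lambda>_. borel) X UNIV" and indep_Y: "indep_vars (\<lambda>_. borel) Y UNIV"
    unfolding X_def Y_def by (intro indep_vars_fun_eps[OF inj], simp)+
  have X_ge_1: "1 \<le> X k \<omega>" for k \<omega>
    unfolding X_def by (rule one_le_majorant[OF a r(1)])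
  have Y_le_X: "\<bar>Y k \<omega>\<bar> \<le> X k \<omega>" for k \<omega>
    unfolding X_def Y_def using P_bound P_1 e_bound by (rule abs_le_majorant)
  have int_X: "integrable M (X k)" for k
    unfolding X_def using a r by (intro integrable_majorant_eps) auto
  have Y_meas: "Y k \<in> borel_measurable M" for k
    unfolding Y_def by measurable
  have "expectation (X k) = expectation (\<lambda>\<omega>. majorant H p a r k (eps 1 \<omega>))" for k
    unfolding X_def by (rule integral_eps_eq) simp
  then have summable_X: "summable (\<lambda>k. expectation (X k) - 1)"
    using summable_expectation_majorant[OF a r] by simp
  have lim_X: "AE \<omega> in M. (\<lambda>K. \<Prod>k<K. X k \<omega>) \<longlonglongrightarrow> \<Psi> \<omega>"
    unfolding X_def \<Psi>_def majorant_def using a r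
    by (intro AE_tendsto_prod_exp_series[where a=a]) (auto simp: abs_of_nonneg)
  have lim_Y: "AE \<omega> in M. (\<lambda>K. \<Prod>k<K. Y k \<omega>) \<longlonglongrightarrow> \<Phi> \<omega>"
    unfolding Y_def \<Phi>_def using P_1 e_bound r by (rule AE_tendsto_prod_exp_series)
  have [measurable]: "\<Psi> \<in> borel_measurable M" "\<Phi> \<in> borel_measurable M"
    unfolding \<Psi>_def \<Phi>_def by measurable
  note limit = tendsto_prod_expectation_indep[OF indep_X indep_Y int_X Y_meas X_ge_1 Y_le_X summable_X lim_X _ lim_Y]
  show "integrable M \<Phi>"
    using limit(1) by simp
  have "expectation (Y k) = expectation (\<lambda>\<omega>. P k (eps 1 \<omega>) * exp (e k (eps 1 \<omega>)))" for k
    unfolding Y_def by (rule integral_eps_eq) simp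
  with limit(2) show "(\<lambda>K. \<Prod>k<K. expectation (\<lambda>\<omega>. P k (eps 1 \<omega>) * exp (e k (eps 1 \<omega>)))) \<longlonglongrightarrow> expectation \<Phi>"
    by simp
qed

lemma expectation_mult_exp_series:
  fixes Q :: "real^'n \<Rightarrow> real" and e :: "nat \<Rightarrow> real^'n \<Rightarrow> real" and t :: int
  assumes [measurable]: "Q \<in> borel_measurable borel" and e_meas[measurable]: "\<And>k. e k \<in> borel_measurable borel"
    and Q_bound: "\<And>z. \<bar>Q z\<bar> \<le> (1 + norm z) ^ p"
    and e_bound: "\<And>k z. \<bar>e k z\<bar> \<le> a * r ^ k * (1 + norm z)" and a: "0 \<le> a" and r: "0 \<le> r" "r < 1"
  defines "\<Phi> \<equiv> \<lambda>\<omega>. Q (eps t \<omega>) * exp (\<Sum>k. e k (eps (t - int k) \<omega>))"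
  shows "integrable M \<Phi>"
    and "convergent_prod (\<lambda>v. expectation (\<lambda>\<omega>. exp (e (Suc v) (eps 1 \<omega>))))"
    and "expectation \<Phi> = expectation (\<lambda>\<omega>. Q (eps 1 \<omega>) * exp (e 0 (eps 1 \<omega>)))
                          * (\<Prod>v. expectation (\<lambda>\<omega>. exp (e (Suc v) (eps 1 \<omega>))))"
proof -
  define P where "P k = (if k = 0 then Q else (\<lambda>_. 1))" for k :: nat
  define c where "c k = expectation (\<lambda>\<omega>. P k (eps 1 \<omega>) * exp (e k (eps 1 \<omega>)))" for k
  have inj: "inj (\<lambda>k::nat. t - int k)"
    by (auto simp: inj_on_def)
  have P: "P k \<in> borel_measurable borel" "\<bar>P k z\<bar> \<le> (1 + norm z) ^ p" "1 \<le> k \<Longrightarrow> P k z = 1" for k z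
    using Q_bound by (simp_all add: P_def one_le_power)
  note series = expectation_prod_exp_series[OF inj P(1) e_meas P(2) P(3) e_bound a r]
  have \<Phi>_eq: "\<Phi> = (\<lambda>\<omega>. (\<Prod>k<1. P k (eps (t - int k) \<omega>)) * exp (\<Sum>k. e k (eps (t - int k) \<omega>)))"
    by (simp add: \<Phi>_def P_def)
  show "integrable M \<Phi>"
    unfolding \<Phi>_eq by (rule series(1))
  have "\<bar>e (Suc v) z\<bar> \<le> a * r ^ v * (1 + norm z)" for v z
    using e_bound[of "Suc v" z] mult_left_le_one_le[of "a * r ^ v * (1 + norm z)" r] a r
    by (simp add: mult_ac)
  then show conv: "convergent_prod (\<lambda>v. expectation (\<lambda>\<omega>. exp (e (Suc v) (eps 1 \<omega>))))"
    using a r by (intro convergent_prod_expectation_exp) auto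
  have "(\<lambda>K. \<Prod>k<K. c k) \<longlonglongrightarrow> expectation \<Phi>"
    unfolding \<Phi>_eq c_def by (rule series(2))
  moreover have "convergent_prod c"
    using conv convergent_prod_Suc_iff[of c] by (simp add: c_def P_def)
  then have "(\<lambda>K. \<Prod>k<K. c k) \<longlonglongrightarrow> c 0 * (\<Prod>v. c (Suc v))"
    using convergent_prod_tendsto_lessThan prodinf_eq_head_mult by simp
  ultimately show "expectation \<Phi> = expectation (\<lambda>\<omega>. Q (eps 1 \<omega>) * exp (e 0 (eps 1 \<omega>)))
                          * (\<Prod>v. expectation (\<lambda>\<omega>. exp (e (Suc v) (eps 1 \<omega>))))"
    by (simp add: LIMSEQ_unique c_def P_def)
qed

end

section \<open>The spatiotemporal E-GARCH process\<close>

locale egarch = std_normal_noise M eps for M :: "'a measure" and eps :: "int \<Rightarrow> 'a \<Rightarrow> real^'n::finite" +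
  fixes W1 W2 :: "real^'n^'n" and alpha1 :: "real^'n" and rho0 rho1 lam0 lam1 \<Theta> \<xi> c0 r0 :: real
  assumes invertible: "invertible (mat 1 - lam0 *\<^sub>R W2)"
    and decay: "\<And>k x. norm (mpow (lam1 *\<^sub>R Smat lam0 W2) k *v x) \<le> c0 * r0 ^ k * norm x"
    and r0: "0 < r0" "r0 < 1"
begin

abbreviation "S \<equiv> Smat lam0 W2"

abbreviation "Mm \<equiv> rho0 *\<^sub>R (lam1 *\<^sub>R (Smat lam0 W2 ** W1)) + rho1 *\<^sub>R mat 1"

abbreviation "A \<equiv> matrix_inv ((1 - lam1) *\<^sub>R mat 1 - lam0 *\<^sub>R W2)"

abbreviation "Y \<equiv> Yproc M eps \<Theta> \<xi> W1 W2 alpha1 rho0 rho1 lam0 lam1"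

abbreviation "log_h t \<omega> \<equiv> \<Sum>v. logvol_series M eps \<Theta> \<xi> W1 W2 alpha1 rho0 rho1 lam0 lam1 t v \<omega>"

(* The news impact function g on a noise vector: the centring constant of gfun is the same for every t. *)
definition news :: "real^'n \<Rightarrow> real^'n" where
  "news z = \<Theta> *\<^sub>R z + \<xi> *\<^sub>R ((\<chi> i. \<bar>z $ i\<bar>) - (\<chi> i. expectation (\<lambda>\<omega>. \<bar>eps 1 \<omega> $ i\<bar>)))"

(* ln h_t = A alpha1 + (\<Sum>k. impulse k *v g(eps_(t-k))) by logvol_series_sums. *)
definition impulse :: "nat \<Rightarrow> real^'n^'n" where
  "impulse k = (case k of 0 \<Rightarrow> rho0 *\<^sub>R (S ** W1) | Suc v \<Rightarrow> lam1 ^ v *\<^sub>R (mpow S (Suc v) ** Mm))"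

definition response :: "real^'n \<Rightarrow> nat \<Rightarrow> real^'n \<Rightarrow> real" where
  "response w k z = (1/2) * ((impulse k *v news z) \<bullet> w)"

lemma r0_le: "0 \<le> r0" "r0 < 1"
  using r0 by auto

lemma gfun_eq_news: "gfun M eps \<Theta> \<xi> t \<omega> = news (eps t \<omega>)"
proof -
  have "expectation (\<lambda>\<omega>. \<bar>eps t \<omega> $ i\<bar>) = expectation (\<lambda>\<omega>. \<bar>eps 1 \<omega> $ i\<bar>)" for i
    by (rule integral_eps_eq) simp
  then show ?thesis
    by (simp add: gfun_def news_def Finite_Cartesian_Product.vec_eq_iff algebra_simps)
qed

lemma measurable_news[measurable]: "news \<in> borel_measurable borel"
proof (rule borel_measurable_vecI)
  fix i
  have "(\<lambda>z. news z $ i) = (\<lambda>z. \<Theta> * z $ i + \<xi> * (\<bar>z $ i\<bar> - expectation (\<lambda>\<omega>. \<bar>eps 1 \<omega> $ i\<bar>)))"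
    by (simp add: news_def fun_eq_iff)
  then show "(\<lambda>z. news z $ i) \<in> borel_measurable borel"
    by simp
qed

lemma measurable_response[measurable]: "response w k \<in> borel_measurable borel"
  unfolding response_def by measurable

lemma measurable_log_h[measurable]: "(\<lambda>\<omega>. log_h t \<omega>) \<in> borel_measurable M"
  unfolding logvol_series_def Delta_def gfun_eq_news by measurable

lemma news_bound:
  obtains C where "0 \<le> C" "\<And>z. norm (news z) \<le> C * (1 + norm z)"
proof
  define m :: "real^'n" where "m = (\<chi> i. expectation (\<lambda>\<omega>. \<bar>eps 1 \<omega> $ i\<bar>))"
  show "0 \<le> \<bar>\<Theta>\<bar> + \<bar>\<xi>\<bar> + \<bar>\<xi>\<bar> * norm m"
    by simp
  fix z :: "real^'n"
  have "norm (\<chi> i. \<bar>z $ i\<bar>) = norm z"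
    by (simp add: norm_vec_def)
  have "norm (news z) \<le> \<bar>\<Theta>\<bar> * norm z + \<bar>\<xi>\<bar> * norm ((\<chi> i. \<bar>z $ i\<bar>) - m)"
    unfolding news_def m_def[symmetric] by (rule order_trans[OF norm_triangle_ineq]) simp
  also have "\<dots> \<le> \<bar>\<Theta>\<bar> * norm z + \<bar>\<xi>\<bar> * (norm z + norm m)"
    using norm_triangle_ineq4[of "\<chi> i. \<bar>z $ i\<bar>" m] \<open>norm (\<chi> i. \<bar>z $ i\<bar>) = norm z\<close>
    by (intro add_left_mono mult_left_mono) auto
  also have "\<dots> \<le> (\<bar>\<Theta>\<bar> + \<bar>\<xi>\<bar> + \<bar>\<xi>\<bar> * norm m) * (1 + norm z)"
    by (simp add: algebra_simps)
  finally show "norm (news z) \<le> (\<bar>\<Theta>\<bar> + \<bar>\<xi>\<bar> + \<bar>\<xi>\<bar> * norm m) * (1 + norm z)" .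
qed

lemma norm_mpow_mult_le: "norm (mpow (lam1 *\<^sub>R S) v *v (X *v y)) \<le> \<bar>c0\<bar> * onorm ((*v) X) * r0 ^ v * norm y"
proof -
  have "norm (mpow (lam1 *\<^sub>R S) v *v (X *v y)) \<le> c0 * r0 ^ v * norm (X *v y)"
    by (rule decay)
  also have "\<dots> \<le> \<bar>c0\<bar> * r0 ^ v * (onorm ((*v) X) * norm y)"
    using r0 onorm[OF matrix_vector_mul_bounded_linear, of X y]
    by (intro mult_mono) (auto intro: mult_right_mono)
  finally show ?thesis
    by (simp add: mult_ac)
qed

lemma impulse_Suc_mult: "impulse (Suc v) *v x = mpow (lam1 *\<^sub>R S) v *v ((S ** Mm) *v x)"
  unfolding impulse_def mpow_scaleR
  by (simp add: mpow_Suc_right matrix_mul_assoc scaleR_matrix_vector_mult matrix_vector_mul_assoc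
      scalar_matrix_assoc[symmetric] del: mpow.simps(2))

lemma impulse_decay:
  obtains K where "0 \<le> K" "\<And>k x. norm (impulse k *v x) \<le> K * r0 ^ k * norm x"
proof
  define K where "K = max (onorm ((*v) (impulse 0))) (\<bar>c0\<bar> * onorm ((*v) (S ** Mm)) / r0)"
  show "0 \<le> K"
    unfolding K_def by (simp add: onorm_pos_le le_max_iff_disj)
  fix k x
  show "norm (impulse k *v x) \<le> K * r0 ^ k * norm x"
  proof (cases k)
    case 0
    have "norm (impulse 0 *v x) \<le> onorm ((*v) (impulse 0)) * norm x"
      by (rule onorm[OF matrix_vector_mul_bounded_linear])
    also have "\<dots> \<le> K * norm x"
      unfolding K_def by (intro mult_right_mono) auto
    finally show ?thesis
      using 0 by simp
  next
    case (Suc v)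
    have "norm (impulse k *v x) \<le> (\<bar>c0\<bar> * onorm ((*v) (S ** Mm)) / r0) * r0 ^ k * norm x"
      unfolding Suc impulse_Suc_mult using norm_mpow_mult_le[of v "S ** Mm" x] r0
      by (simp add: field_simps)
    also have "\<dots> \<le> K * r0 ^ k * norm x"
      unfolding K_def using r0 by (intro mult_right_mono) auto
    finally show ?thesis .
  qed
qed

lemma response_bound:
  obtains a where "0 \<le> a" "\<And>k z. \<bar>response w k z\<bar> \<le> a * r0 ^ k * (1 + norm z)"
proof -
  obtain C where C: "0 \<le> C" "\<And>z. norm (news z) \<le> C * (1 + norm z)"
    using news_bound by blast
  obtain K where K: "0 \<le> K" "\<And>k x. norm (impulse k *v x) \<le> K * r0 ^ k * norm x"
    using impulse_decay by blast
  show thesis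
  proof
    show "0 \<le> norm w * K * C / 2"
      using C K by simp
    fix k z
    have "\<bar>response w k z\<bar> \<le> (1/2) * (norm (impulse k *v news z) * norm w)"
      unfolding response_def abs_mult by (simp add: Cauchy_Schwarz_ineq2)
    also have "\<dots> \<le> (1/2) * ((K * r0 ^ k * (C * (1 + norm z))) * norm w)"
      using K C r0 by (intro mult_left_mono mult_right_mono order_trans[OF K(2)]) auto
    finally show "\<bar>response w k z\<bar> \<le> norm w * K * C / 2 * r0 ^ k * (1 + norm z)"
      by (simp add: mult_ac)
  qed
qed

lemma response_0: "response w 0 (eps 1 \<omega>) = (1/2) * rho0 * (((S ** W1) *v gfun M eps \<Theta> \<xi> 1 \<omega>) \<bullet> w)"
  by (simp add: response_def impulse_def gfun_eq_news scaleR_matrix_vector_mult)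

lemma response_Suc:
  "response w (Suc v) (eps 1 \<omega>) = (1/2) * lam1 ^ v * (((mpow S (Suc v) ** Mm) *v gfun M eps \<Theta> \<xi> 1 \<omega>) \<bullet> w)"
  by (simp add: response_def impulse_def gfun_eq_news scaleR_matrix_vector_mult del: mpow.simps(2))

lemma summable_mpow_mult_news:
  assumes "summable (\<lambda>k. r0 ^ k * (1 + norm (eps (\<sigma> k) \<omega>)))"
  shows "summable (\<lambda>v. mpow (lam1 *\<^sub>R S) v *v (X *v news (eps (\<sigma> v) \<omega>)))"
proof -
  obtain C where C: "0 \<le> C" "\<And>z. norm (news z) \<le> C * (1 + norm z)"
    using news_bound by blast
  have "norm (mpow (lam1 *\<^sub>R S) v *v (X *v news z)) \<le> (\<bar>c0\<bar> * onorm ((*v) X) * C) * (r0 ^ v * (1 + norm z))"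
    for v z
  proof -
    have "norm (mpow (lam1 *\<^sub>R S) v *v (X *v news z)) \<le> \<bar>c0\<bar> * onorm ((*v) X) * r0 ^ v * norm (news z)"
      by (rule norm_mpow_mult_le)
    also have "\<dots> \<le> \<bar>c0\<bar> * onorm ((*v) X) * r0 ^ v * (C * (1 + norm z))"
      using r0 onorm_pos_le[OF matrix_vector_mul_bounded_linear, of X] by (intro mult_left_mono C(2)) auto
    finally show ?thesis
      by (simp add: mult_ac)
  qed
  then show ?thesis
    by (intro summable_comparison_test'[where N=0, OF summable_mult[OF assms]]) simp
qed

lemma impulse_mult_eq:
  "impulse 0 *v z = rho0 *\<^sub>R (S *v (W1 *v z))"
  "impulse (Suc v) *v z = rho0 *\<^sub>R (mpow (lam1 *\<^sub>R S) (Suc v) *v (S *v (W1 *v z)))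
                          + rho1 *\<^sub>R (mpow (lam1 *\<^sub>R S) v *v (S *v z))"
proof -
  show "impulse 0 *v z = rho0 *\<^sub>R (S *v (W1 *v z))"
    by (simp add: impulse_def scaleR_matrix_vector_mult matrix_vector_mul_assoc)
  have "(S ** Mm) *v y = rho0 *\<^sub>R ((lam1 *\<^sub>R S) *v (S *v (W1 *v y))) + rho1 *\<^sub>R (S *v y)" for y
    by (simp add: matrix_vector_mul_assoc[symmetric] matrix_vector_mult_add_rdistrib
        matrix_vector_right_distrib scaleR_matrix_vector_mult matrix_vector_mult_scaleR)
  then show "impulse (Suc v) *v z = rho0 *\<^sub>R (mpow (lam1 *\<^sub>R S) (Suc v) *v (S *v (W1 *v z)))
                          + rho1 *\<^sub>R (mpow (lam1 *\<^sub>R S) v *v (S *v z))"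
    unfolding impulse_Suc_mult
    by (simp add: matrix_vector_right_distrib matrix_vector_mult_scaleR matrix_vector_mul_assoc
        matrix_mul_assoc mpow_Suc_right del: mpow.simps(2))
qed

lemma logvol_series_eq:
  "logvol_series M eps \<Theta> \<xi> W1 W2 alpha1 rho0 rho1 lam0 lam1 t v \<omega>
   = mpow (lam1 *\<^sub>R S) v *v (S *v alpha1)
     + (rho0 *\<^sub>R (mpow (lam1 *\<^sub>R S) v *v (S *v (W1 *v news (eps (t - int v) \<omega>))))
        + rho1 *\<^sub>R (mpow (lam1 *\<^sub>R S) v *v (S *v news (eps (t - int (Suc v)) \<omega>))))"
  by (simp add: logvol_series_def Delta_def gfun_eq_news mpow_scaleR scaleR_matrix_vector_mult
      matrix_vector_right_distrib matrix_vector_mult_scaleR algebra_simps)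

lemma logvol_series_sums:
  assumes summable: "summable (\<lambda>k. r0 ^ k * (1 + norm (eps (t - int k) \<omega>)))"
  shows "summable (\<lambda>k. impulse k *v news (eps (t - int k) \<omega>))"
    and "(\<lambda>v. logvol_series M eps \<Theta> \<xi> W1 W2 alpha1 rho0 rho1 lam0 lam1 t v \<omega>)
           sums (A *v alpha1 + (\<Sum>k. impulse k *v news (eps (t - int k) \<omega>)))"
proof -
  define u where "u v = rho0 *\<^sub>R (mpow (lam1 *\<^sub>R S) v *v (S *v (W1 *v news (eps (t - int v) \<omega>))))" for v
  define u' where "u' v = rho1 *\<^sub>R (mpow (lam1 *\<^sub>R S) v *v (S *v news (eps (t - int (Suc v)) \<omega>)))" for v
  have "summable u"
    unfolding u_def using summable_mpow_mult_news[OF summable, of "S ** W1"]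
    by (intro summable_scaleR_right) (simp add: matrix_vector_mul_assoc)
  moreover have "summable u'"
    unfolding u'_def using summable_mpow_mult_news[OF summable_geometric_shift[OF summable r0(1)], of S]
    by (intro summable_scaleR_right) simp
  ultimately have u_sums: "u sums suminf u" "u' sums suminf u'"
    by (simp_all add: summable_sums)
  have "impulse k *v news (eps (t - int k) \<omega>) = u k + (case k of 0 \<Rightarrow> 0 | Suc v \<Rightarrow> u' v)" for k
    by (cases k) (simp_all add: u_def u'_def impulse_mult_eq)
  then have impulse_sums: "(\<lambda>k. impulse k *v news (eps (t - int k) \<omega>)) sums (suminf u + suminf u')"
    using sums_add_shifted[OF u_sums] by simp
  then show "summable (\<lambda>k. impulse k *v news (eps (t - int k) \<omega>))"
    by (rule sums_summable)
  have "(\<lambda>v. mpow (lam1 *\<^sub>R S) v *v (S *v alpha1)) sums (A *v alpha1)"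
    by (rule resolvent_neumann_sums[OF invertible decay r0_le])
  then have "(\<lambda>v. logvol_series M eps \<Theta> \<xi> W1 W2 alpha1 rho0 rho1 lam0 lam1 t v \<omega>)
      sums (A *v alpha1 + (suminf u + suminf u'))"
    unfolding logvol_series_eq u_def[symmetric] u'_def[symmetric] by (intro sums_add u_sums)
  with impulse_sums show "(\<lambda>v. logvol_series M eps \<Theta> \<xi> W1 W2 alpha1 rho0 rho1 lam0 lam1 t v \<omega>)
      sums (A *v alpha1 + (\<Sum>k. impulse k *v news (eps (t - int k) \<omega>)))"
    by (simp add: sums_iff)
qed

lemma AE_summable_logvol_series:
  "AE \<omega> in M. summable (\<lambda>v. logvol_series M eps \<Theta> \<xi> W1 W2 alpha1 rho0 rho1 lam0 lam1 t v \<omega>)"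
  using AE_summable_geometric_norm_eps[OF r0_le, of "\<lambda>k. t - int k"]
  by eventually_elim (rule sums_summable[OF logvol_series_sums(2)])

lemma AE_exp_half_log_h:
  "AE \<omega> in M. summable (\<lambda>k. response w k (eps (t - int k) \<omega>))
     \<and> exp ((1/2) * (log_h t \<omega> \<bullet> w))
       = exp ((1/2) * ((A *v alpha1) \<bullet> w)) * exp (\<Sum>k. response w k (eps (t - int k) \<omega>))"
  using AE_summable_geometric_norm_eps[OF r0_le, of "\<lambda>k. t - int k"]
proof eventually_elim
  case (elim \<omega>)
  note sums = logvol_series_sums[OF elim]
  have lin: "bounded_linear (\<lambda>x::real^'n. (1/2) * (x \<bullet> w))"
    by (intro bounded_linear_const_mult bounded_linear_inner_left)
  have "log_h t \<omega> = A *v alpha1 + (\<Sum>k. impulse k *v news (eps (t - int k) \<omega>))"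
    using sums(2) by (simp add: sums_iff)
  then show ?case
    unfolding response_def using bounded_linear.summable[OF lin sums(1)] bounded_linear.suminf[OF lin sums(1)]
    by (simp add: inner_add_left distrib_left exp_add)
qed

lemma expectation_mult_exp_half_log_h:
  fixes Q :: "real^'n \<Rightarrow> real"
  assumes [measurable]: "Q \<in> borel_measurable borel" and Q_bound: "\<And>z. \<bar>Q z\<bar> \<le> (1 + norm z) ^ p"
  shows "integrable M (\<lambda>\<omega>. Q (eps t \<omega>) * exp ((1/2) * (log_h t \<omega> \<bullet> w)))"
    and "convergent_prod (\<lambda>v. expectation (\<lambda>\<omega>.
           exp ((1/2) * lam1 ^ v * (((mpow S (Suc v) ** Mm) *v gfun M eps \<Theta> \<xi> 1 \<omega>) \<bullet> w))))"
    and "expectation (\<lambda>\<omega>. Q (eps t \<omega>) * exp ((1/2) * (log_h t \<omega> \<bullet> w)))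
      = exp ((1/2) * ((A *v alpha1) \<bullet> w))
        * expectation (\<lambda>\<omega>. Q (eps 1 \<omega>) * exp ((1/2) * rho0 * (((S ** W1) *v gfun M eps \<Theta> \<xi> 1 \<omega>) \<bullet> w)))
        * (\<Prod>v. expectation (\<lambda>\<omega>.
            exp ((1/2) * lam1 ^ v * (((mpow S (Suc v) ** Mm) *v gfun M eps \<Theta> \<xi> 1 \<omega>) \<bullet> w))))"
proof -
  obtain a where a: "0 \<le> a" "\<And>k z. \<bar>response w k z\<bar> \<le> a * r0 ^ k * (1 + norm z)"
    using response_bound by blast
  note series = expectation_mult_exp_series[OF assms(1) measurable_response Q_bound a(2) a(1) r0_le]
  have AE_eq: "AE \<omega> in M. exp ((1/2) * ((A *v alpha1) \<bullet> w)) * (Q (eps t \<omega>) * exp (\<Sum>k. response w k (eps (t - int k) \<omega>)))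
      = Q (eps t \<omega>) * exp ((1/2) * (log_h t \<omega> \<bullet> w))"
    using AE_exp_half_log_h[of w t] by eventually_elim simp
  show "integrable M (\<lambda>\<omega>. Q (eps t \<omega>) * exp ((1/2) * (log_h t \<omega> \<bullet> w)))"
    using integrable_mult_right[OF series(1)[where t=t]] _ AE_eq by (rule integrable_cong_AE_imp) simp
  show "convergent_prod (\<lambda>v. expectation (\<lambda>\<omega>.
      exp ((1/2) * lam1 ^ v * (((mpow S (Suc v) ** Mm) *v gfun M eps \<Theta> \<xi> 1 \<omega>) \<bullet> w))))"
    using series(2) by (simp add: response_Suc)
  have "expectation (\<lambda>\<omega>. Q (eps t \<omega>) * exp ((1/2) * (log_h t \<omega> \<bullet> w)))
      = exp ((1/2) * ((A *v alpha1) \<bullet> w)) * expectation (\<lambda>\<omega>. Q (eps t \<omega>) * exp (\<Sum>k. response w k (eps (t - int k) \<omega>)))"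
    using integral_cong_AE[OF _ _ AE_eq, symmetric] by simp
  with series(3)[where t=t] show "expectation (\<lambda>\<omega>. Q (eps t \<omega>) * exp ((1/2) * (log_h t \<omega> \<bullet> w)))
      = exp ((1/2) * ((A *v alpha1) \<bullet> w))
        * expectation (\<lambda>\<omega>. Q (eps 1 \<omega>) * exp ((1/2) * rho0 * (((S ** W1) *v gfun M eps \<Theta> \<xi> 1 \<omega>) \<bullet> w)))
        * (\<Prod>v. expectation (\<lambda>\<omega>.
            exp ((1/2) * lam1 ^ v * (((mpow S (Suc v) ** Mm) *v gfun M eps \<Theta> \<xi> 1 \<omega>) \<bullet> w))))"
    by (simp add: response_0 response_Suc mult.assoc)
qed

lemma Y_component: "Y t \<omega> $ i = eps t \<omega> $ i * exp ((1/2) * (log_h t \<omega> \<bullet> axis i 1))"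
  by (simp add: Yproc_def inner_axis)

lemma integrable_abs_Y_power: "integrable M (\<lambda>\<omega>. \<bar>Y t \<omega> $ i\<bar> ^ p)"
proof -
  have "\<bar>z $ i\<bar> ^ p \<le> (1 + norm z) ^ p" for z :: "real^'n"
    using component_le_norm_cart[of z i] by (intro power_mono) auto
  then have "integrable M (\<lambda>\<omega>. \<bar>eps t \<omega> $ i\<bar> ^ p * exp ((1/2) * (log_h t \<omega> \<bullet> axis i (real p))))"
    by (intro expectation_mult_exp_half_log_h(1)) auto
  moreover have "\<bar>Y t \<omega> $ i\<bar> ^ p = \<bar>eps t \<omega> $ i\<bar> ^ p * exp ((1/2) * (log_h t \<omega> \<bullet> axis i (real p)))" for \<omega>
    unfolding Y_component abs_mult power_mult_distrib
    by (simp add: inner_axis exp_of_nat_mult[symmetric] mult_ac)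
  ultimately show ?thesis
    by simp
qed

lemma expectation_Y:
  "convergent_prod (\<lambda>v. expectation (\<lambda>\<omega>.
      exp ((1/2) * lam1 ^ v * ((mpow S (Suc v) ** Mm) *v gfun M eps \<Theta> \<xi> 1 \<omega>) $ i)))
   \<and> expectation (\<lambda>\<omega>. Y t \<omega> $ i)
     = exp ((1/2) * (A *v alpha1) $ i)
       * expectation (\<lambda>\<omega>. eps 1 \<omega> $ i * exp ((1/2) * rho0 * ((S ** W1) *v gfun M eps \<Theta> \<xi> 1 \<omega>) $ i))
       * (\<Prod>v. expectation (\<lambda>\<omega>.
            exp ((1/2) * lam1 ^ v * ((mpow S (Suc v) ** Mm) *v gfun M eps \<Theta> \<xi> 1 \<omega>) $ i)))"
proof -
  have "\<bar>z $ i\<bar> \<le> (1 + norm z) ^ 1" for z :: "real^'n"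
    using component_le_norm_cart[of z i] by simp
  note moment = expectation_mult_exp_half_log_h[where Q="\<lambda>z. z $ i" and w="axis i 1", OF _ this]
  show ?thesis
    using moment(2,3) unfolding Y_component by (simp add: inner_axis)
qed

lemma expectation_Y_squared:
  "convergent_prod (\<lambda>v. expectation (\<lambda>\<omega>.
      exp (lam1 ^ v * ((mpow S (Suc v) ** Mm) *v gfun M eps \<Theta> \<xi> 1 \<omega>) $ i)))
   \<and> expectation (\<lambda>\<omega>. (Y t \<omega> $ i)\<^sup>2)
     = exp ((A *v alpha1) $ i)
       * expectation (\<lambda>\<omega>. (eps 1 \<omega> $ i)\<^sup>2 * exp (rho0 * ((S ** W1) *v gfun M eps \<Theta> \<xi> 1 \<omega>) $ i))
       * (\<Prod>v. expectation (\<lambda>\<omega>.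
            exp (lam1 ^ v * ((mpow S (Suc v) ** Mm) *v gfun M eps \<Theta> \<xi> 1 \<omega>) $ i)))"
proof -
  have "\<bar>(z $ i)\<^sup>2\<bar> \<le> (1 + norm z) ^ 2" for z :: "real^'n"
    using power_mono[OF _ abs_ge_zero, of "z $ i" "1 + norm z" 2] component_le_norm_cart[of z i] by simp
  note moment = expectation_mult_exp_half_log_h[where Q="\<lambda>z. (z $ i)\<^sup>2" and w="axis i 2", OF _ this]
  have half: "(1/2) * c * (x \<bullet> axis i 2) = c * x $ i" "(1/2) * (x \<bullet> axis i 2) = x $ i" for c and x :: "real^'n"
    by (simp_all add: inner_axis)
  have "(Y t \<omega> $ i)\<^sup>2 = (eps t \<omega> $ i)\<^sup>2 * exp ((1/2) * (log_h t \<omega> \<bullet> axis i 2))" for \<omega>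
    unfolding Y_component half power_mult_distrib by (simp add: inner_axis power2_eq_square exp_add[symmetric])
  then show ?thesis
    using moment(2,3) unfolding half by simp
qed

lemma expectation_Y_mult_Y:
  "convergent_prod (\<lambda>v. expectation (\<lambda>\<omega>.
      exp ((1/2) * lam1 ^ v * (((mpow S (Suc v) ** Mm) *v gfun M eps \<Theta> \<xi> 1 \<omega>) $ i
                               + ((mpow S (Suc v) ** Mm) *v gfun M eps \<Theta> \<xi> 1 \<omega>) $ j))))
   \<and> expectation (\<lambda>\<omega>. Y t \<omega> $ i * Y t \<omega> $ j)
     = exp ((1/2) * ((A *v alpha1) $ i + (A *v alpha1) $ j))
       * expectation (\<lambda>\<omega>. eps 1 \<omega> $ i * eps 1 \<omega> $ j
            * exp ((1/2) * rho0 * (((S ** W1) *v gfun M eps \<Theta> \<xi> 1 \<omega>) $ i + ((S ** W1) *v gfun M eps \<Theta> \<xi> 1 \<omega>) $ j)))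
       * (\<Prod>v. expectation (\<lambda>\<omega>.
            exp ((1/2) * lam1 ^ v * (((mpow S (Suc v) ** Mm) *v gfun M eps \<Theta> \<xi> 1 \<omega>) $ i
                                     + ((mpow S (Suc v) ** Mm) *v gfun M eps \<Theta> \<xi> 1 \<omega>) $ j))))"
proof -
  have "\<bar>z $ i * z $ j\<bar> \<le> (1 + norm z) ^ 2" for z :: "real^'n"
    using component_le_norm_cart[of z i] component_le_norm_cart[of z j]
    by (auto simp: abs_mult power2_eq_square intro: mult_mono)
  note moment = expectation_mult_exp_half_log_h[where Q="\<lambda>z. z $ i * z $ j" and w="axis i 1 + axis j 1", OF _ this]
  have "Y t \<omega> $ i * Y t \<omega> $ j = eps t \<omega> $ i * eps t \<omega> $ j * exp ((1/2) * (log_h t \<omega> \<bullet> (axis i 1 + axis j 1)))"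
    for \<omega>
    unfolding Y_component by (simp add: inner_add_right inner_axis distrib_left exp_add)
  then show ?thesis
    using moment(2,3) by (simp add: inner_add_right inner_axis)
qed

(* In Y_t(s_i) Y_(t+H)(s_j), the noise eps_(t+H-k) enters through the polynomial factor
   cross_factor H i j k and the exponent cross_response H i j k. *)
definition cross_factor :: "nat \<Rightarrow> 'n \<Rightarrow> 'n \<Rightarrow> nat \<Rightarrow> real^'n \<Rightarrow> real" where
  "cross_factor H i j k z = (if k = 0 then z $ j else 1) * (if k = H then z $ i else 1)"

definition cross_response :: "nat \<Rightarrow> 'n \<Rightarrow> 'n \<Rightarrow> nat \<Rightarrow> real^'n \<Rightarrow> real" where
  "cross_response H i j k z = response (axis j 1) k z + (if H \<le> k then response (axis i 1) (k - H) z else 0)"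

lemma measurable_cross_factor[measurable]: "cross_factor H i j k \<in> borel_measurable borel"
  unfolding cross_factor_def by measurable

lemma measurable_cross_response[measurable]: "cross_response H i j k \<in> borel_measurable borel"
  unfolding cross_response_def by measurable

lemma cross_response_bound:
  obtains a where "0 \<le> a" "\<And>k z. \<bar>cross_response H i j k z\<bar> \<le> a * r0 ^ k * (1 + norm z)"
proof -
  obtain ai where ai: "0 \<le> ai" "\<And>k z. \<bar>response (axis i 1) k z\<bar> \<le> ai * r0 ^ k * (1 + norm z)"
    using response_bound by blast
  obtain aj where aj: "0 \<le> aj" "\<And>k z. \<bar>response (axis j 1) k z\<bar> \<le> aj * r0 ^ k * (1 + norm z)"
    using response_bound by blast
  have "\<bar>if H \<le> k then response (axis i 1) (k - H) z else 0\<bar> \<le> ai / r0 ^ H * r0 ^ k * (1 + norm z)" for k z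
  proof (cases "H \<le> k")
    case True
    then have "r0 ^ k = r0 ^ (k - H) * r0 ^ H"
      by (simp add: power_add[symmetric])
    then have "ai / r0 ^ H * r0 ^ k = ai * r0 ^ (k - H)"
      using r0 by simp
    then show ?thesis
      using True ai(2)[of "k - H" z] by simp
  qed (use ai(1) r0 in simp)
  then have "\<bar>cross_response H i j k z\<bar> \<le> (aj + ai / r0 ^ H) * r0 ^ k * (1 + norm z)" for k z
    unfolding cross_response_def using abs_triangle_ineq aj(2)[of k z] by (smt (verit) distrib_right)
  moreover have "0 \<le> aj + ai / r0 ^ H"
    using ai(1) aj(1) r0 by simp
  ultimately show thesis
    using that by blast
qed

lemma abs_cross_factor_le: "\<bar>cross_factor H i j k z\<bar> \<le> (1 + norm z) ^ 2"
proof -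
  have "\<bar>z $ l\<bar> \<le> 1 + norm z" for l
    using component_le_norm_cart[of z l] by simp
  then show ?thesis
    unfolding cross_factor_def abs_mult power2_eq_square by (intro mult_mono) auto
qed

lemma AE_Y_mult_Y_eq:
  "AE \<omega> in M. Y t \<omega> $ i * Y (t + int H) \<omega> $ j
     = exp ((1/2) * (A *v alpha1) $ i) * exp ((1/2) * (A *v alpha1) $ j)
       * ((\<Prod>k<Suc H. cross_factor H i j k (eps (t + int H - int k) \<omega>))
          * exp (\<Sum>k. cross_response H i j k (eps (t + int H - int k) \<omega>)))"
  using AE_exp_half_log_h[of "axis i 1" t] AE_exp_half_log_h[of "axis j 1" "t + int H"]
proof eventually_elim
  case (elim \<omega>)
  define F where "F k = (if H \<le> k then response (axis i 1) (k - H) (eps (t + int H - int k) \<omega>) else 0)" for k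
  have "(\<lambda>m. F (m + H)) = (\<lambda>m. response (axis i 1) m (eps (t - int m) \<omega>))"
    by (simp add: F_def fun_eq_iff)
  moreover have "summable (\<lambda>m. response (axis i 1) m (eps (t - int m) \<omega>))"
    using elim(1) by simp
  ultimately have "(\<lambda>m. F (m + H)) sums (\<Sum>m. response (axis i 1) m (eps (t - int m) \<omega>))"
    by (simp add: summable_sums)
  then have sums_i: "F sums (\<Sum>m. response (axis i 1) m (eps (t - int m) \<omega>))"
    using sums_iff_shift[of F H] by (simp add: F_def)
  have sums_j: "(\<lambda>k. response (axis j 1) k (eps (t + int H - int k) \<omega>))
      sums (\<Sum>k. response (axis j 1) k (eps (t + int H - int k) \<omega>))"
    using elim(2) by (simp add: summable_sums)
  have "(\<Sum>k. cross_response H i j k (eps (t + int H - int k) \<omega>))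
      = (\<Sum>k. response (axis j 1) k (eps (t + int H - int k) \<omega>)) + (\<Sum>m. response (axis i 1) m (eps (t - int m) \<omega>))"
    unfolding cross_response_def F_def[symmetric] using sums_add[OF sums_j sums_i] by (simp add: sums_iff)
  moreover have "(\<Prod>k<Suc H. cross_factor H i j k (eps (t + int H - int k) \<omega>)) = eps (t + int H) \<omega> $ j * eps t \<omega> $ i"
    unfolding cross_factor_def prod.distrib by simp
  ultimately show ?case
    using elim unfolding Y_component by (simp add: exp_add mult_ac inner_axis)
qed

lemma tendsto_expectation_Y_mult_Y:
  "(\<lambda>K. exp ((1/2) * (A *v alpha1) $ i) * exp ((1/2) * (A *v alpha1) $ j)
      * (\<Prod>k<K. expectation (\<lambda>\<omega>. cross_factor H i j k (eps 1 \<omega>) * exp (cross_response H i j k (eps 1 \<omega>)))))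
   \<longlonglongrightarrow> expectation (\<lambda>\<omega>. Y t \<omega> $ i * Y (t + int H) \<omega> $ j)"
proof -
  obtain a where a: "0 \<le> a" "\<And>k z. \<bar>cross_response H i j k z\<bar> \<le> a * r0 ^ k * (1 + norm z)"
    using cross_response_bound by blast
  have inj: "inj (\<lambda>k::nat. t + int H - int k)"
    by (auto simp: inj_on_def)
  have factor_1: "Suc H \<le> k \<Longrightarrow> cross_factor H i j k z = 1" for k z
    by (simp add: cross_factor_def)
  note series = expectation_prod_exp_series[where P="cross_factor H i j" and e="cross_response H i j" and H="Suc H",
      OF inj measurable_cross_factor measurable_cross_response abs_cross_factor_le factor_1 a(2) a(1) r0_le]
  have "expectation (\<lambda>\<omega>. Y t \<omega> $ i * Y (t + int H) \<omega> $ j)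
      = exp ((1/2) * (A *v alpha1) $ i) * exp ((1/2) * (A *v alpha1) $ j)
        * expectation (\<lambda>\<omega>. (\<Prod>k<Suc H. cross_factor H i j k (eps (t + int H - int k) \<omega>))
            * exp (\<Sum>k. cross_response H i j k (eps (t + int H - int k) \<omega>)))"
    using integral_cong_AE[OF _ _ AE_Y_mult_Y_eq] series(1) by (simp add: Y_component)
  with series(2) show ?thesis
    by (simp add: tendsto_mult_left)
qed

lemma expectation_Y_mult_Y_shift:
  "expectation (\<lambda>\<omega>. Y t \<omega> $ i * Y (t + h) \<omega> $ j) = expectation (\<lambda>\<omega>. Y 0 \<omega> $ i * Y h \<omega> $ j)"
proof -
  have shift_nat: "expectation (\<lambda>\<omega>. Y s \<omega> $ i' * Y (s + int H) \<omega> $ j')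
      = expectation (\<lambda>\<omega>. Y s' \<omega> $ i' * Y (s' + int H) \<omega> $ j')" for s s' i' j' H
    using tendsto_expectation_Y_mult_Y[of i' j' H s] tendsto_expectation_Y_mult_Y[of i' j' H s']
    by (rule LIMSEQ_unique)
  show ?thesis
  proof (cases "0 \<le> h")
    case True
    then obtain H where "h = int H"
      using nonneg_eq_int by blast
    then show ?thesis
      using shift_nat[of t i H j 0] by simp
  next
    case False
    then obtain H where h: "h = - int H"
      by (intro that[of "nat (- h)"]) simp
    have "expectation (\<lambda>\<omega>. Y t \<omega> $ i * Y (t + h) \<omega> $ j)
        = expectation (\<lambda>\<omega>. Y (t - int H) \<omega> $ j * Y (t - int H + int H) \<omega> $ i)"
      by (simp add: h mult.commute)
    also have "\<dots> = expectation (\<lambda>\<omega>. Y (- int H) \<omega> $ j * Y (- int H + int H) \<omega> $ i)"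
      by (rule shift_nat)
    finally show ?thesis
      by (simp add: h mult.commute)
  qed
qed

end

theorem theorem1:
  fixes M :: "'a measure"
    and eps :: "int \<Rightarrow> 'a \<Rightarrow> real^'n"
    and W1 W2 :: "real^'n^'n"
    and alpha1 :: "real^'n"
    and rho0 rho1 lam0 lam1 \<Theta> \<xi> :: real
  defines "S \<equiv> Smat lam0 W2"
    and "g \<equiv> gfun M eps \<Theta> \<xi>"
    and "Y \<equiv> Yproc M eps \<Theta> \<xi> W1 W2 alpha1 rho0 rho1 lam0 lam1"
    and "Mm \<equiv> rho0 *\<^sub>R (lam1 *\<^sub>R (Smat lam0 W2 ** W1)) + rho1 *\<^sub>R mat 1"
    and "A \<equiv> matrix_inv ((1 - lam1) *\<^sub>R mat 1 - lam0 *\<^sub>R W2)"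
  assumes P: "prob_space M"
    and xi: "\<xi> \<ge> 0" and Theta: "\<bar>\<Theta>\<bar> < \<xi>"
    and inv: "invertible (mat 1 - lam0 *\<^sub>R W2)"
    and sr1: "spec_rad (lam1 *\<^sub>R S) < 1"
    and sr0: "spec_rad (lam0 *\<^sub>R W2) < 1"
    and indep: "prob_space.indep_vars M (\<lambda>_. borel) (\<lambda>(t, i) \<omega>. eps t \<omega> $ i) UNIV"
    and normal: "\<And>t i. distributed M lborel (\<lambda>\<omega>. eps t \<omega> $ i) std_normal_density"
  shows
    "(\<forall>t. AE \<omega> in M. summable (\<lambda>v. logvol_series M eps \<Theta> \<xi> W1 W2 alpha1 rho0 rho1 lam0 lam1 t v \<omega>))
   \<and> (\<forall>t i (p::nat). integrable M (\<lambda>\<omega>. \<bar>Y t \<omega> $ i\<bar> ^ p))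
   \<and> (\<forall>t i. prob_space.expectation M (\<lambda>\<omega>. Y t \<omega> $ i) = prob_space.expectation M (\<lambda>\<omega>. Y 0 \<omega> $ i))
   \<and> (\<forall>t h i j. prob_space.expectation M (\<lambda>\<omega>. Y t \<omega> $ i * Y (t + h) \<omega> $ j)
              = prob_space.expectation M (\<lambda>\<omega>. Y 0 \<omega> $ i * Y h \<omega> $ j))
   \<and> (\<forall>t i.
        convergent_prod (\<lambda>v. prob_space.expectation M (\<lambda>\<omega>.
            exp ((1/2) * lam1 ^ v * ((mpow S (Suc v) ** Mm) *v g 1 \<omega>) $ i)))
      \<and> prob_space.expectation M (\<lambda>\<omega>. Y t \<omega> $ i)
        = exp ((1/2) * (A *v alpha1) $ i)
          * prob_space.expectation M (\<lambda>\<omega>. eps 1 \<omega> $ i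
               * exp ((1/2) * rho0 * ((S ** W1) *v g 1 \<omega>) $ i))
          * (\<Prod>v. prob_space.expectation M (\<lambda>\<omega>.
               exp ((1/2) * lam1 ^ v * ((mpow S (Suc v) ** Mm) *v g 1 \<omega>) $ i))))
   \<and> (\<forall>t i.
        convergent_prod (\<lambda>v. prob_space.expectation M (\<lambda>\<omega>.
            exp (lam1 ^ v * ((mpow S (Suc v) ** Mm) *v g 1 \<omega>) $ i)))
      \<and> prob_space.expectation M (\<lambda>\<omega>. (Y t \<omega> $ i)\<^sup>2)
        = exp ((A *v alpha1) $ i)
          * prob_space.expectation M (\<lambda>\<omega>. (eps 1 \<omega> $ i)\<^sup>2
               * exp (rho0 * ((S ** W1) *v g 1 \<omega>) $ i))
          * (\<Prod>v. prob_space.expectation M (\<lambda>\<omega>.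
               exp (lam1 ^ v * ((mpow S (Suc v) ** Mm) *v g 1 \<omega>) $ i))))
   \<and> (\<forall>t i j.
        convergent_prod (\<lambda>v. prob_space.expectation M (\<lambda>\<omega>.
            exp ((1/2) * lam1 ^ v * (((mpow S (Suc v) ** Mm) *v g 1 \<omega>) $ i
                                     + ((mpow S (Suc v) ** Mm) *v g 1 \<omega>) $ j))))
      \<and> prob_space.expectation M (\<lambda>\<omega>. Y t \<omega> $ i * Y t \<omega> $ j)
        = exp ((1/2) * ((A *v alpha1) $ i + (A *v alpha1) $ j))
          * prob_space.expectation M (\<lambda>\<omega>. eps 1 \<omega> $ i * eps 1 \<omega> $ j
               * exp ((1/2) * rho0 * (((S ** W1) *v g 1 \<omega>) $ i + ((S ** W1) *v g 1 \<omega>) $ j)))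
          * (\<Prod>v. prob_space.expectation M (\<lambda>\<omega>.
               exp ((1/2) * lam1 ^ v * (((mpow S (Suc v) ** Mm) *v g 1 \<omega>) $ i
                                        + ((mpow S (Suc v) ** Mm) *v g 1 \<omega>) $ j)))))"
proof -
  interpret std_normal_noise M eps
    using P indep normal by (simp add: std_normal_noise_def std_normal_noise_axioms_def)
  show ?thesis
  proof (rule mpow_decay_if_spec_rad_lt_1[OF sr1])
    fix c r
    assume "0 < r" "r < 1" and "\<And>k x. norm (mpow (lam1 *\<^sub>R S) k *v x) \<le> c * r ^ k * norm x"
    then interpret E: egarch M eps W1 W2 alpha1 rho0 rho1 lam0 lam1 \<Theta> \<xi> c r
      using inv unfolding S_def by unfold_locales
    have mean_stationary: "expectation (\<lambda>\<omega>. E.Y t \<omega> $ i) = expectation (\<lambda>\<omega>. E.Y 0 \<omega> $ i)" for t i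
      using E.expectation_Y[of i t, THEN conjunct2] E.expectation_Y[of i 0, THEN conjunct2] by (rule trans[OF _ sym])
    show ?thesis
      unfolding S_def g_def Y_def Mm_def A_def
      by (intro conjI allI E.AE_summable_logvol_series E.integrable_abs_Y_power mean_stationary
          E.expectation_Y_mult_Y_shift E.expectation_Y[THEN conjunct1] E.expectation_Y[THEN conjunct2]
          E.expectation_Y_squared[THEN conjunct1] E.expectation_Y_squared[THEN conjunct2]
          E.expectation_Y_mult_Y[THEN conjunct1] E.expectation_Y_mult_Y[THEN conjunct2])
  qed
qed

end
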